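(* Let $c>0$, let $\nu,\tilde\nu$ be probability measures on $\mathbb R_+$ different from $\boldsymbol d_0$, and let $\mu,\mathcal D,\widetilde{\mathcal D}$ be as below. Let $\boldsymbol{\tilde\delta}\in\widetilde{\mathcal D}$ and assume there exists $\boldsymbol x\in\mathbb R\setminus\{0\}$ such that $$\boldsymbol\delta:=c\int\frac{t}{-\boldsymbol x(1+\boldsymbol{\tilde\delta}t)}\nu(dt)\in\mathcal D,\qquad \boldsymbol{\tilde\delta}=\int\frac{t}{-\boldsymbol x(1+\boldsymbol\delta t)}\tilde\nu(dt),$$ and $$1-\boldsymbol x^2\boldsymbol\gamma(\boldsymbol x,\boldsymbol{\tilde\delta})\boldsymbol{\tilde\gamma}(\boldsymbol x,\boldsymbol\delta)>0,$$ where $\boldsymbol\gamma(\boldsymbol x,\boldsymbol{\tilde\delta})=c\int\frac{t^2}{\boldsymbol x^2(1+\boldsymbol{\tilde\delta}t)^2}\nu(dt)$ and $\boldsymbol{\tilde\gamma}(\boldsymbol x,\boldsymbol\delta)=\int\frac{t^2}{\boldsymbol x^2(1+\boldsymbol\delta t)^2}\tilde\nu(dt)$. Then $\boldsymbol x\notin\operatorname{supp}(\mu)$.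
   Context: $\mathbb C_+=\{z:\Im z>0\}$, $\boldsymbol d_0$ is the Dirac mass at $0$. For $z\in\mathbb C_+$, $(\delta(z),\tilde\delta(z))$ is the unique solution in $\mathbb C_+^2$ of $\delta = c\int \frac{t}{-z(1+\tilde\delta t)}\nu(dt)$, $\tilde\delta=\int\frac{t}{-z(1+\delta t)}\tilde\nu(dt)$; $m(z)=\int\frac{1}{-z(1+\tilde\delta(z)t)}\nu(dt)$ is the Stieltjes transform $\int\frac{\mu(dt)}{t-z}$ of a probability measure $\mu$ on $\mathbb R_+$. Define $\mathcal D=\{0\}\cup\{\boldsymbol\delta\in\mathbb R\setminus\{0\}:-\boldsymbol\delta^{-1}\notin\operatorname{supp}(\tilde\nu)\}$ if $\operatorname{supp}(\tilde\nu)$ is compact and $\mathcal D=\{\boldsymbol\delta\in\mathbb R\setminus\{0\}:-\boldsymbol\delta^{-1}\notin\operatorname{supp}(\tilde\nu)\}$ otherwise; $\widetilde{\mathcal D}$ is defined in the same way with $\nu$ in place of $\tilde\nu$. *)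

theory Defs
  imports "HOL-Probability.Probability"
begin

definition msupp :: "real measure \<Rightarrow> real set" where
  "msupp M = {x. \<forall>e>0. emeasure M (ball x e) \<noteq> 0}"

definition prob_on_Rplus :: "real measure \<Rightarrow> bool" where
  "prob_on_Rplus M \<longleftrightarrow> prob_space M \<and> sets M = sets borel \<and> emeasure M {..<0} = 0"

text \<open>The set D built from a measure (D uses nu-tilde, D-tilde uses nu).\<close>
definition Dset :: "real measure \<Rightarrow> real set" where
  "Dset M = (if compact (msupp M) then {0} else {})
            \<union> {d. d \<noteq> 0 \<and> - inverse d \<notin> msupp M}"

text \<open>The unique solution (delta(z), delta-tilde(z)) in C_+^2 of the fixed point system.\<close>
definition delta_pair :: "real \<Rightarrow> real measure \<Rightarrow> real measure \<Rightarrow> complex \<Rightarrow> complex \<times> complex" where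
  "delta_pair c nu nut z = (THE p. Im (fst p) > 0 \<and> Im (snd p) > 0 \<and>
      fst p = complex_of_real c *
        (\<integral>t. complex_of_real t / (- z * (1 + snd p * complex_of_real t)) \<partial>nu) \<and>
      snd p = (\<integral>t. complex_of_real t / (- z * (1 + fst p * complex_of_real t)) \<partial>nut))"

definition m_fun :: "real \<Rightarrow> real measure \<Rightarrow> real measure \<Rightarrow> complex \<Rightarrow> complex" where
  "m_fun c nu nut z =
     (\<integral>t. 1 / (- z * (1 + snd (delta_pair c nu nut z) * complex_of_real t)) \<partial>nu)"

end

(*
  For x < 0 the claim is trivial since mu lives on R_+.  For x > 0, write the system as the
  fixed point problem d = c F_nu(F_nut(d, z), z).  By Cauchy-Schwarz the two inner maps have
  Lipschitz constants whose product is at most G / |z|^2, where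
  G = c int t^2/|1 + d~ t|^2 dnu * int t^2/|1 + d t|^2 dnut is the loop gain; at z = x this is
  x^2 gamma gamma~ < 1 by hypothesis, so by continuity the map contracts a small disc around the
  real solution for every z close to x.  Taking imaginary parts of the equations gives
  Im d (|z|^2 - G) = Im z c int t/|1 + d~ t|^2 dnu and the analogue for d~, so the fixed point
  lies in the upper half plane, is therefore (delta(z), delta~(z)), and Im m(z) <= K Im z near x.
  As Im m(E + ih) >= mu(ball E h) / (2h), balls of radius h near x have measure O(h^2), and
  covering a fixed ball by N of them shows that it is mu-null.
*)

theory Submission
  imports Defs
begin

section \<open>Probability measures on the real line\<close>

definition borel_prob :: "real measure \<Rightarrow> bool" where
  "borel_prob N \<longleftrightarrow> prob_space N \<and> sets N = sets borel"

lemma borel_prob_measurable: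
  "borel_prob N \<Longrightarrow> f \<in> borel_measurable borel \<Longrightarrow> f \<in> borel_measurable N"
  unfolding borel_prob_def using measurable_cong_sets by blast

lemma borel_prob_space: "borel_prob N \<Longrightarrow> space N = UNIV"
  unfolding borel_prob_def by (metis sets_eq_imp_space_eq space_borel)

lemma borel_prob_integrable_bounded:
  fixes f :: "real \<Rightarrow> 'b::{banach,second_countable_topology}"
  assumes "borel_prob N" "f \<in> borel_measurable borel" "AE t in N. norm (f t) \<le> C"
  shows "integrable N f"
proof -
  interpret prob_space N using assms unfolding borel_prob_def by simp
  show ?thesis
    by (rule integrable_const_bound[OF assms(3)]) (rule borel_prob_measurable[OF assms(1,2)])
qed

lemma borel_prob_integrable_const: "borel_prob N \<Longrightarrow> integrable N (\<lambda>t. C::real)"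
  unfolding borel_prob_def using prob_space.finite_measure finite_measure.integrable_const by blast

lemma borel_prob_measure_space: "borel_prob N \<Longrightarrow> measure N (space N) = 1"
  unfolding borel_prob_def by (simp add: prob_space.prob_space)

lemma borel_prob_AE_not_in_null:
  assumes "borel_prob N" "A \<in> sets borel" "emeasure N A = 0"
  shows "AE t in N. t \<notin> A"
proof -
  have "A \<in> sets N" using assms unfolding borel_prob_def by simp
  then show ?thesis
    by (subst AE_iff_measurable) (auto simp: borel_prob_space[OF assms(1)] assms(3))
qed

lemma prob_on_Rplus_borel_prob: "prob_on_Rplus N \<Longrightarrow> borel_prob N"
  unfolding prob_on_Rplus_def borel_prob_def by simp

lemma prob_on_Rplus_AE_nonneg: "prob_on_Rplus N \<Longrightarrow> AE t in N. 0 \<le> t"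
  using borel_prob_AE_not_in_null[of N "{..<0}"] prob_on_Rplus_borel_prob
  unfolding prob_on_Rplus_def by (auto simp: not_less)

lemma prob_on_Rplus_notin_msupp_neg:
  assumes "prob_on_Rplus N" "x < 0"
  shows "x \<notin> msupp N"
proof -
  have "ball x (-x) \<subseteq> {..<0}" by (auto simp: dist_real_def abs_less_iff)
  then have "emeasure N (ball x (-x)) \<le> emeasure N {..<0}"
    by (rule emeasure_mono) (use assms(1) in \<open>simp add: prob_on_Rplus_def\<close>)
  then have "emeasure N (ball x (-x)) = 0" using assms(1) unfolding prob_on_Rplus_def by simp
  then show ?thesis using assms(2) unfolding msupp_def by force
qed

lemma msupp_complement_eq_Union_null_balls:
  assumes "borel_prob N"
  shows "- msupp N = \<Union>{ball y e | y e. e > 0 \<and> emeasure N (ball y e) = 0}"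
proof (intro equalityI subsetI)
  fix x assume "x \<in> - msupp N"
  then obtain e where "e > 0" "emeasure N (ball x e) = 0" unfolding msupp_def by auto
  then show "x \<in> \<Union>{ball y e | y e. e > 0 \<and> emeasure N (ball y e) = 0}"
    using centre_in_ball by blast
next
  fix x assume "x \<in> \<Union>{ball y e | y e. e > 0 \<and> emeasure N (ball y e) = 0}"
  then obtain y e where ye: "x \<in> ball y e" "emeasure N (ball y e) = 0" by auto
  have "ball x (e - dist y x) \<subseteq> ball y e"
    by (auto simp: dist_commute) (metis dist_commute dist_triangle_lt add.commute less_diff_eq)
  then have "emeasure N (ball x (e - dist y x)) \<le> emeasure N (ball y e)"
    by (rule emeasure_mono) (use assms in \<open>simp add: borel_prob_def\<close>)
  then have "emeasure N (ball x (e - dist y x)) = 0" using ye by simp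
  moreover have "e - dist y x > 0" using ye by simp
  ultimately show "x \<in> - msupp N" unfolding msupp_def by blast
qed

lemma borel_prob_AE_msupp:
  assumes "borel_prob N"
  shows "AE t in N. t \<in> msupp N"
proof -
  define F where "F = {ball y e | y e. e > 0 \<and> emeasure N (ball y e) = 0}"
  have "\<And>S. S \<in> F \<Longrightarrow> open S" unfolding F_def by auto
  then obtain F' where F': "F' \<subseteq> F" "countable F'" "\<Union>F' = \<Union>F" using Lindelof by metis
  have "AE t in N. \<forall>B\<in>F'. t \<notin> B"
  proof (subst AE_ball_countable[OF F'(2)], intro ballI)
    fix B assume "B \<in> F'"
    then obtain y e where "B = ball y e" "emeasure N (ball y e) = 0" using F'(1) unfolding F_def by auto
    then show "AE t in N. t \<notin> B" using borel_prob_AE_not_in_null[OF assms, of "ball y e"] by simp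
  qed
  then show ?thesis
  proof eventually_elim
    case (elim t)
    then show ?case using msupp_complement_eq_Union_null_balls[OF assms] F'(3) unfolding F_def by blast
  qed
qed

lemma borel_prob_eq_return_0:
  assumes "borel_prob N" "AE t in N. t = 0"
  shows "N = return borel 0"
proof (rule measure_eqI)
  show "sets N = sets (return borel 0)" using assms(1) unfolding borel_prob_def by simp
  interpret prob_space N using assms(1) unfolding borel_prob_def by simp
  fix A assume A: "A \<in> sets N"
  then have "A \<in> sets borel" using assms(1) unfolding borel_prob_def by simp
  show "emeasure N A = emeasure (return borel 0) A"
  proof (cases "0 \<in> A")
    case True
    have "AE t in N. t \<in> A" using assms(2) by eventually_elim (use True in simp)
    then show ?thesis using A True \<open>A \<in> sets borel\<close> by (simp add: emeasure_eq_1_AE)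
  next
    case False
    have "AE t in N. t \<notin> A" using assms(2) by eventually_elim (use False in simp)
    then show ?thesis using A False \<open>A \<in> sets borel\<close>
      by (subst (asm) AE_iff_measurable[OF A]) (auto simp: borel_prob_space[OF assms(1)])
  qed
qed

section \<open>Resolvent bounds\<close>

definition resolvent_bounded :: "real measure \<Rightarrow> complex \<Rightarrow> real \<Rightarrow> bool" where
  "resolvent_bounded N w M \<longleftrightarrow> M > 0 \<and> (AE t in N. 0 \<le> t \<and>
     t \<le> M * cmod (1 + w * of_real t) \<and> 1 \<le> M * cmod (1 + w * of_real t))"

lemma resolvent_bounded_pos: "resolvent_bounded N w M \<Longrightarrow> M > 0"
  unfolding resolvent_bounded_def by simp

lemma resolvent_bounded_AE:
  assumes "resolvent_bounded N w M"
  shows "AE t in N. 0 \<le> t \<and> 0 < cmod (1 + w * of_real t) \<and>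
    t / cmod (1 + w * of_real t) \<le> M \<and> 1 / cmod (1 + w * of_real t) \<le> M"
proof -
  have M: "M > 0" using assms by (rule resolvent_bounded_pos)
  have "AE t in N. 0 \<le> t \<and> t \<le> M * cmod (1 + w * of_real t) \<and> 1 \<le> M * cmod (1 + w * of_real t)"
    using assms unfolding resolvent_bounded_def by simp
  then show ?thesis
  proof eventually_elim
    case (elim t)
    then have "0 < cmod (1 + w * of_real t)" using M by (metis mult_zero_right not_one_le_zero order_less_le norm_ge_zero)
    then show ?case using elim by (simp add: divide_simps mult.commute)
  qed
qed

lemma resolvent_bounded_AE_nonneg: "resolvent_bounded N w M \<Longrightarrow> AE t in N. 0 \<le> t"
  unfolding resolvent_bounded_def by auto

lemma resolvent_bounded_perturb:
  assumes "resolvent_bounded N w M" "cmod (w' - w) \<le> 1 / (2*M)"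
  shows "resolvent_bounded N w' (2*M)"
proof -
  have M: "M > 0" using assms(1) by (rule resolvent_bounded_pos)
  have "AE t in N. 0 \<le> t \<and> t \<le> M * cmod (1 + w * of_real t) \<and> 1 \<le> M * cmod (1 + w * of_real t)"
    using assms unfolding resolvent_bounded_def by auto
  then have "AE t in N. 0 \<le> t \<and> t \<le> 2*M * cmod (1 + w' * of_real t) \<and> 1 \<le> 2*M * cmod (1 + w' * of_real t)"
  proof eventually_elim
    case (elim t)
    have "(1 + w * of_real t) + (w' - w) * of_real t = 1 + w' * of_real t" by (simp add: algebra_simps)
    then have "cmod (1 + w * of_real t) - cmod ((w' - w) * of_real t) \<le> cmod (1 + w' * of_real t)"
      using norm_diff_ineq[of "1 + w * of_real t" "(w' - w) * of_real t"] by metis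
    moreover have "cmod ((w' - w) * of_real t) \<le> t / (2*M)"
    proof -
      have "cmod (w' - w) * (2*M) \<le> 1" using assms(2) M by (simp add: divide_simps)
      then have "t * (cmod (w' - w) * (2*M)) \<le> t" using elim by (simp add: mult_left_le)
      then have "cmod (w' - w) * t \<le> t / (2*M)" using M by (simp add: divide_simps algebra_simps)
      then show ?thesis using elim by (simp add: norm_mult)
    qed
    moreover have "t / (2*M) \<le> cmod (1 + w * of_real t) / 2" using elim M by (simp add: divide_simps mult.commute)
    ultimately have "cmod (1 + w * of_real t) \<le> 2 * cmod (1 + w' * of_real t)" by linarith
    then have "M * cmod (1 + w * of_real t) \<le> 2*M * cmod (1 + w' * of_real t)"
      using M mult_left_mono[of _ _ M] by fastforce
    then show ?case using elim by linarith
  qed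
  then show ?thesis unfolding resolvent_bounded_def using M by simp
qed

lemma resolvent_bounded_upper_half_plane:
  assumes "AE t in N. 0 \<le> t" "Im w > 0"
  shows "resolvent_bounded N w (1 + cmod w / Im w + 1 / Im w)"
proof -
  let ?M = "1 + cmod w / Im w + 1 / Im w"
  have "AE t in N. 0 \<le> t \<and> t \<le> ?M * cmod (1 + w * of_real t) \<and> 1 \<le> ?M * cmod (1 + w * of_real t)"
    using assms(1)
  proof eventually_elim
    case (elim t)
    let ?A = "cmod (1 + w * of_real t)"
    have "t * Im w \<le> ?A" using abs_Im_le_cmod[of "1 + w * of_real t"] by (simp add: mult.commute)
    then have tA: "t \<le> ?A / Im w" using assms(2) by (simp add: divide_simps mult.commute)
    have "1 \<le> ?A + cmod w * t"
      using norm_triangle_ineq2[of 1 "- (w * of_real t)"] elim by (simp add: norm_mult)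
    also have "\<dots> \<le> ?A + cmod w * (?A / Im w)" using mult_left_mono[OF tA norm_ge_zero[of w]] by simp
    also have "\<dots> \<le> ?M * ?A" using assms(2) by (simp add: divide_simps algebra_simps)
    finally have "1 \<le> ?M * ?A" .
    moreover have "?A / Im w \<le> ?M * ?A" using assms(2) by (simp add: divide_simps algebra_simps)
    ultimately show ?case using elim tA by linarith
  qed
  moreover have "?M > 0" using assms(2) by (simp add: add_pos_nonneg)
  ultimately show ?thesis unfolding resolvent_bounded_def by simp
qed

lemma resolvent_bounded_zero:
  assumes "prob_on_Rplus N" "compact (msupp N)"
  shows "\<exists>M. resolvent_bounded N 0 M"
proof -
  obtain R where R: "\<And>y. y \<in> msupp N \<Longrightarrow> \<bar>y\<bar> \<le> R"
    using compact_imp_bounded[OF assms(2)] unfolding bounded_iff by auto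
  have "AE t in N. 0 \<le> t \<and> t \<le> (1 + \<bar>R\<bar>) * cmod (1 + 0 * of_real t) \<and> 1 \<le> (1 + \<bar>R\<bar>) * cmod (1 + 0 * of_real t)"
    using borel_prob_AE_msupp[OF prob_on_Rplus_borel_prob[OF assms(1)]] prob_on_Rplus_AE_nonneg[OF assms(1)]
  proof eventually_elim
    case (elim t)
    then show ?case using R[of t] by auto
  qed
  then show ?thesis unfolding resolvent_bounded_def by (intro exI[of _ "1 + \<bar>R\<bar>"]) auto
qed

lemma resolvent_bounded_real:
  assumes "prob_on_Rplus N" "d \<noteq> 0" "- inverse d \<notin> msupp N"
  shows "\<exists>M. resolvent_bounded N (of_real d) M"
proof -
  obtain e where e: "e > 0" "emeasure N (ball (- inverse d) e) = 0"
    using assms(3) unfolding msupp_def by auto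
  define M where "M = 1/\<bar>d\<bar> + 1/(d*d*e) + 1/(\<bar>d\<bar>*e)"
  have de: "\<bar>d\<bar> * e > 0" using e assms(2) by simp
  have "d*d*e > 0" using e assms(2) by (auto simp: zero_less_mult_iff linorder_neq_iff)
  then have M: "M > 0" unfolding M_def using de assms(2) by (intro add_pos_pos) auto
  have "AE t in N. t \<notin> ball (- inverse d) e"
    using borel_prob_AE_not_in_null[OF prob_on_Rplus_borel_prob[OF assms(1)] _ e(2)] by simp
  moreover have "AE t in N. 0 \<le> t" by (rule prob_on_Rplus_AE_nonneg[OF assms(1)])
  ultimately have "AE t in N. 0 \<le> t \<and> t \<le> M * cmod (1 + of_real d * of_real t)
       \<and> 1 \<le> M * cmod (1 + of_real d * of_real t)"
  proof eventually_elim
    case (elim t)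
    have norm: "cmod (1 + of_real d * of_real t) = \<bar>1 + d * t\<bar>"
      by (metis norm_of_real of_real_1 of_real_add of_real_mult)
    have scale: "\<bar>1 + d * t\<bar> = \<bar>d\<bar> * \<bar>t + inverse d\<bar>" using assms(2)
      by (simp add: abs_mult[symmetric] algebra_simps)
    have "e \<le> \<bar>t + inverse d\<bar>" using elim by (auto simp: dist_real_def)
    then have far: "\<bar>d\<bar> * e \<le> \<bar>1 + d * t\<bar>" using scale assms(2) by simp
    have "t \<le> \<bar>t + inverse d\<bar> + 1/\<bar>d\<bar>"
      using abs_triangle_ineq[of "t + inverse d" "- inverse d"] by (simp add: abs_inverse divide_inverse)
    also have "\<bar>t + inverse d\<bar> = \<bar>1 + d * t\<bar> / \<bar>d\<bar>" using scale assms(2) by simp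
    also have "1/\<bar>d\<bar> \<le> \<bar>1 + d * t\<bar> / (d*d*e)"
    proof -
      have "1/\<bar>d\<bar> = (\<bar>d\<bar>*e) / (\<bar>d\<bar> * (\<bar>d\<bar>*e))" using de e(1) assms(2) by simp
      also have "\<dots> \<le> \<bar>1 + d * t\<bar> / (\<bar>d\<bar> * (\<bar>d\<bar>*e))" using far de by (intro divide_right_mono) auto
      also have "\<bar>d\<bar> * (\<bar>d\<bar>*e) = d*d*e" by (simp add: mult.assoc[symmetric] abs_mult_self_eq)
      finally show ?thesis .
    qed
    also have "\<bar>1 + d * t\<bar> / \<bar>d\<bar> + \<bar>1 + d * t\<bar> / (d*d*e) \<le> M * \<bar>1 + d * t\<bar>"
      unfolding M_def using de by (simp add: distrib_right)
    finally have "t \<le> M * \<bar>1 + d * t\<bar>" by simp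
    moreover have "1 \<le> M * \<bar>1 + d * t\<bar>"
    proof -
      have "1 \<le> \<bar>1 + d * t\<bar> / (\<bar>d\<bar>*e)" using far de by simp
      also have "\<dots> \<le> M * \<bar>1 + d * t\<bar>" unfolding M_def using de e(1) by (simp add: distrib_right)
      finally show ?thesis .
    qed
    ultimately show ?case using elim norm by simp
  qed
  then show ?thesis unfolding resolvent_bounded_def using M by blast
qed

lemma resolvent_bounded_Dset:
  assumes "prob_on_Rplus N" "d \<in> Dset N"
  shows "\<exists>M. resolvent_bounded N (of_real d) M"
proof (cases "d = 0")
  case True
  then show ?thesis using assms resolvent_bounded_zero unfolding Dset_def by (auto split: if_splits)
next
  case False
  then show ?thesis using assms resolvent_bounded_real unfolding Dset_def by (auto split: if_splits)
qed

section \<open>Resolvent integrals and moments\<close>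

text \<open>In the paper's notation \<open>\<delta> = c * resolvent_integral nu 1 \<delta>~ z\<close>,
  \<open>\<delta>~ = resolvent_integral nut 1 \<delta> z\<close> and \<open>m = resolvent_integral nu 0 \<delta>~ z\<close>; at \<open>z = x\<close>,
  \<open>\<gamma> = c * resolvent_moment nu 2 \<delta>~ / x\<^sup>2\<close> and \<open>\<gamma>~ = resolvent_moment nut 2 \<delta> / x\<^sup>2\<close>.\<close>
definition resolvent_integral :: "real measure \<Rightarrow> nat \<Rightarrow> complex \<Rightarrow> complex \<Rightarrow> complex" where
  "resolvent_integral N k w z = (\<integral>t. of_real (t ^ k) / (- z * (1 + w * of_real t)) \<partial>N)"

definition resolvent_moment :: "real measure \<Rightarrow> nat \<Rightarrow> complex \<Rightarrow> real" where
  "resolvent_moment N k w = (\<integral>t. t ^ k / (cmod (1 + w * of_real t))\<^sup>2 \<partial>N)"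

lemma Im_of_real_div_neg: "Im (of_real s / - u) = s * Im u / (cmod u)\<^sup>2"
  by (simp add: Im_divide cmod_power2)

lemma Im_resolvent_term:
  fixes z w :: complex
  assumes "z \<noteq> 0" "1 + w * of_real t \<noteq> 0"
  shows "Im (of_real (t ^ k) / (- z * (1 + w * of_real t))) =
    (Im z * (t ^ k / (cmod (1 + w * of_real t))\<^sup>2) +
     Im (z * w) * (t ^ Suc k / (cmod (1 + w * of_real t))\<^sup>2)) / (cmod z)\<^sup>2"
proof -
  let ?A = "1 + w * of_real t"
  have "Im (of_real (t ^ k) / (- z * ?A)) = t ^ k * Im (z * ?A) / (cmod (z * ?A))\<^sup>2"
    using Im_of_real_div_neg[of "t ^ k" "z * ?A"] by simp
  also have "Im (z * ?A) = Im z + t * Im (z * w)" by (simp add: algebra_simps)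
  also have "(cmod (z * ?A))\<^sup>2 = (cmod z)\<^sup>2 * (cmod ?A)\<^sup>2" by (simp add: norm_mult power_mult_distrib)
  finally show ?thesis using assms by (simp add: field_simps)
qed

lemma Im_z_mult_resolvent_term:
  fixes z w :: complex
  assumes "z \<noteq> 0" "1 + w * of_real t \<noteq> 0"
  shows "Im (z * (of_real t / (- z * (1 + w * of_real t)))) =
    Im w * (t\<^sup>2 / (cmod (1 + w * of_real t))\<^sup>2)"
proof -
  have "z * (of_real t / (- z * A)) = of_real t / - A" if "A \<noteq> 0" for A
    using assms(1) that by (simp add: field_simps)
  from this[OF assms(2)] have "Im (z * (of_real t / (- z * (1 + w * of_real t)))) =
      t * Im (1 + w * of_real t) / (cmod (1 + w * of_real t))\<^sup>2"
    by (simp only: Im_of_real_div_neg)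
  then show ?thesis by (simp add: power2_eq_square)
qed

lemma norm_resolvent_term:
  "0 \<le> t \<Longrightarrow> cmod (of_real (t ^ k) / (- z * (1 + w * of_real t))) = t ^ k / cmod (1 + w * of_real t) / cmod z"
  by (simp add: norm_mult norm_divide norm_power)

lemma integral_lincomb_divide:
  fixes g1 g2 :: "'a \<Rightarrow> real"
  assumes "integrable M g1" "integrable M g2"
  shows "(\<integral>t. (a * g1 t + b * g2 t) / P \<partial>M) = (a * (\<integral>t. g1 t \<partial>M) + b * (\<integral>t. g2 t \<partial>M)) / P"
proof -
  have "(\<integral>t. a * g1 t + b * g2 t \<partial>M) = (\<integral>t. a * g1 t \<partial>M) + (\<integral>t. b * g2 t \<partial>M)"
    using assms by (intro Bochner_Integration.integral_add) auto
  then show ?thesis by (simp only: integral_divide_zero integral_mult_right_zero)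
qed

lemma resolvent_power_le:
  fixes t a M :: real
  assumes "0 \<le> t" "0 < a" "t / a \<le> M" "1 / a \<le> M"
  shows "k \<le> 1 \<Longrightarrow> t ^ k / a \<le> M" and "k \<le> 2 \<Longrightarrow> t ^ k / a\<^sup>2 \<le> M * M"
proof -
  have nonneg: "0 \<le> t / a" "0 \<le> 1 / a" using assms(1,2) by auto
  have M0: "0 \<le> M" using nonneg(2) assms(4) by linarith
  then show "k \<le> 1 \<Longrightarrow> t ^ k / a \<le> M" using assms by (cases k) auto
  assume "k \<le> 2"
  then consider "k = 0" | "k = 1" | "k = 2" by linarith
  then show "t ^ k / a\<^sup>2 \<le> M * M"
  proof cases
    case 1
    have "(1 / a) * (1 / a) \<le> M * M" using assms nonneg M0 by (intro mult_mono) auto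
    then show ?thesis using 1 by (simp add: power2_eq_square)
  next
    case 2
    have "(t / a) * (1 / a) \<le> M * M" using assms nonneg M0 by (intro mult_mono) auto
    then show ?thesis using 2 by (simp add: power2_eq_square)
  next
    case 3
    have "(t / a) * (t / a) \<le> M * M" using assms nonneg M0 by (intro mult_mono) auto
    then show ?thesis using 3 by (simp add: power2_eq_square)
  qed
qed

context
  fixes N :: "real measure" and w :: complex and M :: real
  assumes N: "borel_prob N" and bounded: "resolvent_bounded N w M"
begin

lemma resolvent_integrable:
  assumes "k \<le> 1"
  shows "integrable N (\<lambda>t. of_real (t ^ k) / (- z * (1 + w * of_real t)))"
proof (rule borel_prob_integrable_bounded[OF N _, where C = "M / cmod z"])
  show "(\<lambda>t. of_real (t ^ k) / (- z * (1 + w * of_real t))) \<in> borel_measurable borel" by measurable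
  show "AE t in N. norm (of_real (t ^ k) / (- z * (1 + w * of_real t))) \<le> M / cmod z"
    using resolvent_bounded_AE[OF bounded]
  proof eventually_elim
    case (elim t)
    then have "t ^ k / cmod (1 + w * of_real t) \<le> M" using resolvent_power_le(1) assms by blast
    then have "t ^ k / cmod (1 + w * of_real t) / cmod z \<le> M / cmod z" by (rule divide_right_mono) simp
    then show ?case using elim by (subst norm_resolvent_term) simp_all
  qed
qed

lemma resolvent_moment_integrand_le:
  assumes "k \<le> 2"
  shows "AE t in N. 0 \<le> t \<and> t ^ k / (cmod (1 + w * of_real t))\<^sup>2 \<le> M * M"
  using resolvent_bounded_AE[OF bounded]
proof eventually_elim
  case (elim t)
  then have "t ^ k / (cmod (1 + w * of_real t))\<^sup>2 \<le> M * M"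
    using resolvent_power_le(2)[of t "cmod (1 + w * of_real t)" M k] assms by blast
  then show ?case using elim by simp
qed

lemma resolvent_moment_integrable:
  assumes "k \<le> 2"
  shows "integrable N (\<lambda>t. t ^ k / (cmod (1 + w * of_real t))\<^sup>2)"
proof (rule borel_prob_integrable_bounded[OF N])
  show "AE t in N. norm (t ^ k / (cmod (1 + w * of_real t))\<^sup>2) \<le> M * M"
    using resolvent_moment_integrand_le[OF assms] by eventually_elim simp
qed measurable

lemma resolvent_moment_le:
  assumes "k \<le> 2"
  shows "resolvent_moment N k w \<le> M * M"
proof -
  have "resolvent_moment N k w \<le> (\<integral>t. M * M \<partial>N)" unfolding resolvent_moment_def
  proof (rule integral_mono_AE)
    show "AE t in N. t ^ k / (cmod (1 + w * of_real t))\<^sup>2 \<le> M * M"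
      using resolvent_moment_integrand_le[OF assms] by eventually_elim blast
  qed (use resolvent_moment_integrable[OF assms] borel_prob_integrable_const[OF N] in auto)
  then show ?thesis by (simp add: borel_prob_measure_space[OF N])
qed

lemma Im_resolvent_integral:
  assumes "k \<le> 1" "z \<noteq> 0"
  shows "Im (resolvent_integral N k w z) =
    (Im z * resolvent_moment N k w + Im (z * w) * resolvent_moment N (Suc k) w) / (cmod z)\<^sup>2"
proof -
  let ?g = "\<lambda>k t. t ^ k / (cmod (1 + w * of_real t))\<^sup>2"
  have "Im (resolvent_integral N k w z) = (\<integral>t. Im (of_real (t ^ k) / (- z * (1 + w * of_real t))) \<partial>N)"
    unfolding resolvent_integral_def using resolvent_integrable[OF assms(1)] by simp
  also have "\<dots> = (\<integral>t. (Im z * ?g k t + Im (z * w) * ?g (Suc k) t) / (cmod z)\<^sup>2 \<partial>N)"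
  proof (rule integral_cong_AE)
    show "(\<lambda>t. Im (of_real (t ^ k) / (- z * (1 + w * of_real t)))) \<in> borel_measurable N"
      "(\<lambda>t. (Im z * ?g k t + Im (z * w) * ?g (Suc k) t) / (cmod z)\<^sup>2) \<in> borel_measurable N"
      by (rule borel_prob_measurable[OF N], measurable)+
    show "AE t in N. Im (of_real (t ^ k) / (- z * (1 + w * of_real t))) =
        (Im z * ?g k t + Im (z * w) * ?g (Suc k) t) / (cmod z)\<^sup>2"
      using resolvent_bounded_AE[OF bounded]
      by eventually_elim (rule Im_resolvent_term[OF assms(2)], auto)
  qed
  also have "\<dots> = (Im z * resolvent_moment N k w + Im (z * w) * resolvent_moment N (Suc k) w) / (cmod z)\<^sup>2"
    unfolding resolvent_moment_def using assms(1)
    by (intro integral_lincomb_divide resolvent_moment_integrable) auto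
  finally show ?thesis .
qed

lemma Im_z_mult_resolvent_integral:
  assumes "z \<noteq> 0"
  shows "Im (z * resolvent_integral N 1 w z) = Im w * resolvent_moment N 2 w"
proof -
  have "z * resolvent_integral N 1 w z = (\<integral>t. z * (of_real t / (- z * (1 + w * of_real t))) \<partial>N)"
    unfolding resolvent_integral_def power_one_right by (rule integral_mult_right_zero[symmetric])
  then have "Im (z * resolvent_integral N 1 w z) = (\<integral>t. Im (z * (of_real t / (- z * (1 + w * of_real t)))) \<partial>N)"
    using integral_Im[OF integrable_mult_right[OF resolvent_integrable[of 1]], of z z] by simp
  also have "\<dots> = (\<integral>t. Im w * (t\<^sup>2 / (cmod (1 + w * of_real t))\<^sup>2) \<partial>N)"
  proof (rule integral_cong_AE)
    show "(\<lambda>t. Im (z * (of_real t / (- z * (1 + w * of_real t))))) \<in> borel_measurable N"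
      "(\<lambda>t. Im w * (t\<^sup>2 / (cmod (1 + w * of_real t))\<^sup>2)) \<in> borel_measurable N"
      by (rule borel_prob_measurable[OF N], measurable)+
    show "AE t in N. Im (z * (of_real t / (- z * (1 + w * of_real t)))) = Im w * (t\<^sup>2 / (cmod (1 + w * of_real t))\<^sup>2)"
      using resolvent_bounded_AE[OF bounded]
      by eventually_elim (rule Im_z_mult_resolvent_term[OF assms], auto)
  qed
  also have "\<dots> = Im w * resolvent_moment N 2 w"
    unfolding resolvent_moment_def by (rule integral_mult_right_zero)
  finally show ?thesis .
qed

lemma norm_resolvent_integral_le:
  assumes "k \<le> 1"
  shows "cmod (resolvent_integral N k w z) \<le> M / cmod z"
proof -
  have "cmod (resolvent_integral N k w z) \<le> (\<integral>t. cmod (of_real (t ^ k) / (- z * (1 + w * of_real t))) \<partial>N)"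
    unfolding resolvent_integral_def by (rule integral_norm_bound)
  also have "\<dots> \<le> (\<integral>t. M / cmod z \<partial>N)"
  proof (rule integral_mono_AE)
    show "integrable N (\<lambda>t. cmod (of_real (t ^ k) / (- z * (1 + w * of_real t))))"
      using resolvent_integrable[OF assms] by simp
    show "AE t in N. cmod (of_real (t ^ k) / (- z * (1 + w * of_real t))) \<le> M / cmod z"
      using resolvent_bounded_AE[OF bounded]
    proof eventually_elim
      case (elim t)
      then have "t ^ k / cmod (1 + w * of_real t) \<le> M" using resolvent_power_le(1) assms by blast
      then have "t ^ k / cmod (1 + w * of_real t) / cmod z \<le> M / cmod z" by (rule divide_right_mono) simp
    then show ?case using elim by (subst norm_resolvent_term) simp_all
    qed
  qed (rule borel_prob_integrable_const[OF N])
  finally show ?thesis by (simp add: borel_prob_measure_space[OF N])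
qed

lemma resolvent_moment_1_pos:
  assumes "N \<noteq> return borel 0"
  shows "resolvent_moment N 1 w > 0"
proof -
  have nonneg: "AE t in N. 0 \<le> t / (cmod (1 + w * of_real t))\<^sup>2"
    using resolvent_bounded_AE[OF bounded] by eventually_elim simp
  have "resolvent_moment N 1 w \<noteq> 0"
  proof
    assume "resolvent_moment N 1 w = 0"
    then have "AE t in N. t / (cmod (1 + w * of_real t))\<^sup>2 = 0"
      using integral_nonneg_eq_0_iff_AE[OF _ nonneg] resolvent_moment_integrable[of 1]
      by (simp add: resolvent_moment_def)
    then have "AE t in N. t = 0" using resolvent_bounded_AE[OF bounded] by eventually_elim auto
    then show False using borel_prob_eq_return_0[OF N] assms by simp
  qed
  moreover have "resolvent_moment N 1 w \<ge> 0"
    unfolding resolvent_moment_def using nonneg by (simp add: integral_nonneg_AE)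
  ultimately show ?thesis by simp
qed

end

lemma resolvent_moment_even_nonneg: "even k \<Longrightarrow> 0 \<le> resolvent_moment N k w"
  unfolding resolvent_moment_def by (rule integral_nonneg_AE) (auto simp: zero_le_even_power)

lemma Cauchy_Schwarz_integral:
  fixes f g :: "'a \<Rightarrow> real"
  assumes "integrable M (\<lambda>t. (f t)\<^sup>2)" "integrable M (\<lambda>t. (g t)\<^sup>2)" "integrable M (\<lambda>t. f t * g t)"
  shows "(\<integral>t. f t * g t \<partial>M) \<le> sqrt (\<integral>t. (f t)\<^sup>2 \<partial>M) * sqrt (\<integral>t. (g t)\<^sup>2 \<partial>M)"
proof -
  define A where "A = (\<integral>t. (f t)\<^sup>2 \<partial>M)"
  define B where "B = (\<integral>t. (g t)\<^sup>2 \<partial>M)"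
  define C where "C = (\<integral>t. f t * g t \<partial>M)"
  have A: "0 \<le> A" and B: "0 \<le> B" unfolding A_def B_def by (auto intro: integral_nonneg_AE)
  have quadratic: "0 \<le> A - 2*u*C + u\<^sup>2*B" for u
  proof -
    have "0 \<le> (\<integral>t. (f t - u * g t)\<^sup>2 \<partial>M)" by (rule integral_nonneg_AE) auto
    also have "(\<integral>t. (f t - u * g t)\<^sup>2 \<partial>M) = (\<integral>t. (f t)\<^sup>2 - 2*u*(f t * g t) + u\<^sup>2 * (g t)\<^sup>2 \<partial>M)"
      by (rule Bochner_Integration.integral_cong) (auto simp: power2_eq_square algebra_simps)
    also have "\<dots> = A - 2*u*C + u\<^sup>2*B" unfolding A_def B_def C_def using assms by simp
    finally show ?thesis .
  qed
  have "C \<le> sqrt (A * B)"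
  proof (cases "C \<le> 0")
    case False
    show ?thesis
    proof (cases "B = 0")
      case True
      then show ?thesis using quadratic[of "(A + 1) / (2*C)"] False by simp
    next
      case False
      then have "C\<^sup>2 \<le> A * B" using quadratic[of "C / B"] B by (simp add: field_simps power2_eq_square)
      then show ?thesis by (simp add: real_le_rsqrt)
    qed
  qed (use A B in \<open>smt (verit) real_sqrt_ge_zero mult_nonneg_nonneg\<close>)
  then show ?thesis unfolding A_def B_def C_def by (simp add: real_sqrt_mult)
qed

lemma norm_resolvent_term_diff:
  fixes z w1 w2 :: complex
  assumes "z \<noteq> 0" "1 + w1 * of_real t \<noteq> 0" "1 + w2 * of_real t \<noteq> 0" "0 \<le> t"
  shows "cmod (of_real t / (- z * (1 + w1 * of_real t)) - of_real t / (- z * (1 + w2 * of_real t)))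
     = cmod (w1 - w2) / cmod z * ((t / cmod (1 + w1 * of_real t)) * (t / cmod (1 + w2 * of_real t)))"
proof -
  let ?A1 = "1 + w1 * of_real t" and ?A2 = "1 + w2 * of_real t"
  have "of_real t / (- z * A1) - of_real t / (- z * A2) = of_real t * (A1 - A2) / (z * A1 * A2)"
    if "A1 \<noteq> 0" "A2 \<noteq> 0" for A1 A2
    using that assms(1) by (simp add: field_simps)
  from this[OF assms(2,3)]
  have "of_real t / (- z * ?A1) - of_real t / (- z * ?A2) = of_real t * ((w1 - w2) * of_real t) / (z * ?A1 * ?A2)"
    by (simp add: algebra_simps)
  moreover have "cmod (of_real t * ((w1 - w2) * of_real t) / (z * ?A1 * ?A2))
      = t * (cmod (w1 - w2) * t) / (cmod z * cmod ?A1 * cmod ?A2)"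
    using assms(4) by (simp add: norm_mult norm_divide)
  moreover have "\<dots> = cmod (w1 - w2) / cmod z * ((t / cmod ?A1) * (t / cmod ?A2))"
    by (simp add: field_simps)
  ultimately show ?thesis by simp
qed

lemma resolvent_integral_lipschitz:
  assumes N: "borel_prob N" and bounded: "resolvent_bounded N w1 M1" "resolvent_bounded N w2 M2"
    and "z \<noteq> 0"
  shows "cmod (resolvent_integral N 1 w1 z - resolvent_integral N 1 w2 z) \<le>
    cmod (w1 - w2) / cmod z * (sqrt (resolvent_moment N 2 w1) * sqrt (resolvent_moment N 2 w2))"
proof -
  let ?f = "\<lambda>w t. of_real t / (- z * (1 + w * of_real t))"
  let ?g = "\<lambda>w t. t / cmod (1 + w * of_real t)"
  have g_sq: "(\<lambda>t. (?g w t)\<^sup>2) = (\<lambda>t. t ^ 2 / (cmod (1 + w * of_real t))\<^sup>2)" for w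
    by (simp add: power_divide)
  have "resolvent_integral N 1 w1 z - resolvent_integral N 1 w2 z = (\<integral>t. ?f w1 t - ?f w2 t \<partial>N)"
    using resolvent_integrable[OF N bounded(1), of 1 z] resolvent_integrable[OF N bounded(2), of 1 z]
    unfolding resolvent_integral_def power_one_right by (simp add: Bochner_Integration.integral_diff)
  then have "cmod (resolvent_integral N 1 w1 z - resolvent_integral N 1 w2 z) \<le> (\<integral>t. cmod (?f w1 t - ?f w2 t) \<partial>N)"
    by (simp add: integral_norm_bound)
  also have "\<dots> = (\<integral>t. cmod (w1 - w2) / cmod z * (?g w1 t * ?g w2 t) \<partial>N)"
  proof (rule integral_cong_AE)
    show "(\<lambda>t. cmod (?f w1 t - ?f w2 t)) \<in> borel_measurable N"
      "(\<lambda>t. cmod (w1 - w2) / cmod z * (?g w1 t * ?g w2 t)) \<in> borel_measurable N"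
      by (rule borel_prob_measurable[OF N], measurable)+
    show "AE t in N. cmod (?f w1 t - ?f w2 t) = cmod (w1 - w2) / cmod z * (?g w1 t * ?g w2 t)"
      using resolvent_bounded_AE[OF bounded(1)] resolvent_bounded_AE[OF bounded(2)]
      by eventually_elim (rule norm_resolvent_term_diff[OF assms(4)], auto)
  qed
  also have "\<dots> = cmod (w1 - w2) / cmod z * (\<integral>t. ?g w1 t * ?g w2 t \<partial>N)"
    by (rule integral_mult_right_zero)
  also have "\<dots> \<le> cmod (w1 - w2) / cmod z * (sqrt (\<integral>t. (?g w1 t)\<^sup>2 \<partial>N) * sqrt (\<integral>t. (?g w2 t)\<^sup>2 \<partial>N))"
  proof (intro mult_left_mono Cauchy_Schwarz_integral)
    show "integrable N (\<lambda>t. (?g w1 t)\<^sup>2)" "integrable N (\<lambda>t. (?g w2 t)\<^sup>2)"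
      using resolvent_moment_integrable[OF N bounded(1), of 2] resolvent_moment_integrable[OF N bounded(2), of 2]
      unfolding g_sq by simp_all
    show "integrable N (\<lambda>t. ?g w1 t * ?g w2 t)"
    proof (rule borel_prob_integrable_bounded[OF N, where C = "M1 * M2"])
      show "AE t in N. norm (?g w1 t * ?g w2 t) \<le> M1 * M2"
        using resolvent_bounded_AE[OF bounded(1)] resolvent_bounded_AE[OF bounded(2)]
      proof eventually_elim
        case (elim t)
        then have "?g w1 t * ?g w2 t \<le> M1 * M2"
          using resolvent_bounded_pos[OF bounded(1)] by (intro mult_mono) auto
        then show ?case using elim by (simp add: abs_mult)
      qed
    qed measurable
  qed simp
  also have "\<dots> = cmod (w1 - w2) / cmod z * (sqrt (resolvent_moment N 2 w1) * sqrt (resolvent_moment N 2 w2))"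
    unfolding resolvent_moment_def g_sq ..
  finally show ?thesis .
qed

lemma resolvent_integral_divide: "resolvent_integral N k w z = resolvent_integral N k w 1 / z"
proof -
  have "resolvent_integral N k w z = (\<integral>t. of_real (t ^ k) / (- 1 * (1 + w * of_real t)) / z \<partial>N)"
    unfolding resolvent_integral_def
    by (intro Bochner_Integration.integral_cong refl)
      (metis divide_divide_eq_left mult.commute mult_minus_left mult_1_left)
  also have "\<dots> = resolvent_integral N k w 1 / z"
    unfolding resolvent_integral_def by (rule integral_divide_zero)
  finally show ?thesis .
qed

lemma resolvent_integral_continuous:
  assumes N: "borel_prob N" and bounded: "resolvent_bounded N w0 M"
    and "cmod (w - w0) \<le> 1 / (2*M)" "z \<noteq> 0"
  shows "cmod (resolvent_integral N 1 w z - resolvent_integral N 1 w0 z0) \<le>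
    cmod (w - w0) / cmod z * (2*M*M) + cmod (1/z - 1/z0) * M"
proof -
  have bounded': "resolvent_bounded N w (2*M)" by (rule resolvent_bounded_perturb[OF bounded assms(3)])
  have M: "M > 0" using bounded by (rule resolvent_bounded_pos)
  have "sqrt (resolvent_moment N 2 w) * sqrt (resolvent_moment N 2 w0) \<le> (2*M) * M"
  proof (rule mult_mono)
    show "sqrt (resolvent_moment N 2 w) \<le> 2*M"
      using resolvent_moment_le[OF N bounded', of 2] M by (intro real_le_lsqrt) (auto simp: power2_eq_square)
    show "sqrt (resolvent_moment N 2 w0) \<le> M"
      using resolvent_moment_le[OF N bounded, of 2] M by (intro real_le_lsqrt) (auto simp: power2_eq_square)
  qed (use M resolvent_moment_even_nonneg[of 2] in auto)
  then have "cmod (resolvent_integral N 1 w z - resolvent_integral N 1 w0 z) \<le> cmod (w - w0) / cmod z * (2*M*M)"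
    using resolvent_integral_lipschitz[OF N bounded' bounded assms(4)]
    by (smt (verit) divide_nonneg_nonneg mult_left_mono norm_ge_zero)
  moreover have "cmod (resolvent_integral N 1 w0 z - resolvent_integral N 1 w0 z0) \<le> cmod (1/z - 1/z0) * M"
  proof -
    have "resolvent_integral N 1 w0 z - resolvent_integral N 1 w0 z0 = (1/z - 1/z0) * resolvent_integral N 1 w0 1"
      by (subst (1 2) resolvent_integral_divide) (simp add: field_simps)
    then show ?thesis
      using norm_resolvent_integral_le[OF N bounded, of 1 1] M by (simp add: norm_mult mult_left_mono)
  qed
  ultimately show ?thesis using norm_diff_triangle_ineq[of "resolvent_integral N 1 w z" "resolvent_integral N 1 w0 z"
      "resolvent_integral N 1 w0 z" "resolvent_integral N 1 w0 z0"] by simp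
qed

lemma abs_sq_diff_le:
  fixes a b d M :: real
  assumes "0 \<le> a" "0 \<le> b" "a \<le> 2*M" "b \<le> M" "\<bar>a - b\<bar> \<le> a * b * d" "0 \<le> d"
  shows "\<bar>a\<^sup>2 - b\<^sup>2\<bar> \<le> 6 * M^3 * d"
proof -
  have "a\<^sup>2 - b\<^sup>2 = (a - b) * (a + b)" by (simp add: algebra_simps power2_eq_square)
  then have "\<bar>a\<^sup>2 - b\<^sup>2\<bar> = \<bar>a - b\<bar> * (a + b)" using assms by (simp add: abs_mult)
  also have "\<dots> \<le> (a * b * d) * (a + b)" using assms by (intro mult_right_mono) auto
  also have "\<dots> \<le> ((2*M) * M * d) * (3*M)" using assms
    by (intro mult_mono) (auto intro!: mult_mono mult_nonneg_nonneg)
  also have "\<dots> = 6 * M^3 * d" by (simp add: power3_eq_cube)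
  finally show ?thesis .
qed

lemma resolvent_moment_2_lipschitz:
  assumes N: "borel_prob N" and bounded: "resolvent_bounded N w0 M" and "cmod (w - w0) \<le> 1 / (2*M)"
  shows "\<bar>resolvent_moment N 2 w - resolvent_moment N 2 w0\<bar> \<le> 6 * M^3 * cmod (w - w0)"
proof -
  let ?g = "\<lambda>w t. t\<^sup>2 / (cmod (1 + w * of_real t))\<^sup>2"
  have bounded': "resolvent_bounded N w (2*M)" by (rule resolvent_bounded_perturb[OF bounded assms(3)])
  have int: "integrable N (?g w)" "integrable N (?g w0)"
    using resolvent_moment_integrable[OF N bounded', of 2] resolvent_moment_integrable[OF N bounded, of 2]
    by simp_all
  have "\<bar>resolvent_moment N 2 w - resolvent_moment N 2 w0\<bar> = \<bar>\<integral>t. ?g w t - ?g w0 t \<partial>N\<bar>"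
    unfolding resolvent_moment_def using int by simp
  also have "\<dots> \<le> (\<integral>t. \<bar>?g w t - ?g w0 t\<bar> \<partial>N)"
    by (rule integral_abs_bound)
  also have "\<dots> \<le> (\<integral>t. 6 * M^3 * cmod (w - w0) \<partial>N)"
  proof (rule integral_mono_AE)
    show "AE t in N. \<bar>?g w t - ?g w0 t\<bar> \<le> 6 * M^3 * cmod (w - w0)"
      using resolvent_bounded_AE[OF bounded] resolvent_bounded_AE[OF bounded']
    proof eventually_elim
      case (elim t)
      define p where "p = cmod (1 + w * of_real t)"
      define q where "q = cmod (1 + w0 * of_real t)"
      have pq: "p > 0" "q > 0" using elim unfolding p_def q_def by auto
      have "\<bar>p - q\<bar> \<le> cmod ((1 + w * of_real t) - (1 + w0 * of_real t))"
        unfolding p_def q_def by (rule norm_triangle_ineq3)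
      also have "(1 + w * of_real t) - (1 + w0 * of_real t) = (w - w0) * of_real t"
        by (simp add: algebra_simps)
      finally have "\<bar>p - q\<bar> \<le> cmod (w - w0) * t" using elim by (simp add: norm_mult)
      have "t / p - t / q = t * (q - p) / (p * q)" using pq by (simp add: field_simps)
      then have "\<bar>t / p - t / q\<bar> = t * \<bar>q - p\<bar> / (p * q)" using pq elim by (simp add: abs_mult abs_div)
      also have "\<dots> \<le> t * (cmod (w - w0) * t) / (p * q)"
        using pq elim \<open>\<bar>p - q\<bar> \<le> cmod (w - w0) * t\<close>
        by (intro divide_right_mono mult_left_mono) (auto simp: abs_minus_commute)
      also have "\<dots> = (t / p) * (t / q) * cmod (w - w0)" by (simp add: field_simps)
      finally have "\<bar>t / p - t / q\<bar> \<le> (t / p) * (t / q) * cmod (w - w0)" .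
      then have "\<bar>(t/p)\<^sup>2 - (t/q)\<^sup>2\<bar> \<le> 6 * M^3 * cmod (w - w0)"
        using elim by (intro abs_sq_diff_le) (auto simp: p_def q_def)
      then show ?case by (simp add: p_def q_def power_divide)
    qed
  qed (use int borel_prob_integrable_const[OF N] in auto)
  finally show ?thesis by (simp add: borel_prob_measure_space[OF N])
qed

section \<open>The fixed point equations\<close>

definition delta_equations :: "real \<Rightarrow> real measure \<Rightarrow> real measure \<Rightarrow> complex \<Rightarrow> complex \<Rightarrow> complex \<Rightarrow> bool" where
  "delta_equations c nu nut z d dl \<longleftrightarrow>
     d = of_real c * resolvent_integral nu 1 dl z \<and> dl = resolvent_integral nut 1 d z"

definition loop_gain :: "real \<Rightarrow> real measure \<Rightarrow> real measure \<Rightarrow> complex \<Rightarrow> complex \<Rightarrow> real" where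
  "loop_gain c nu nut dl d = c * resolvent_moment nu 2 dl * resolvent_moment nut 2 d"

lemma loop_gain_nonneg: "0 \<le> c \<Longrightarrow> 0 \<le> loop_gain c nu nut dl d"
  unfolding loop_gain_def by (simp add: resolvent_moment_even_nonneg)

context
  fixes c :: real and nu nut :: "real measure" and z d dl :: complex and A B :: real
  assumes nu: "borel_prob nu" and nut: "borel_prob nut"
    and bounded: "resolvent_bounded nu dl A" "resolvent_bounded nut d B"
    and z: "z \<noteq> 0"
begin

lemma Im_delta_tilde_eq:
  assumes "dl = resolvent_integral nut 1 d z"
  shows "Im (z * dl) = Im d * resolvent_moment nut 2 d"
  using Im_z_mult_resolvent_integral[OF nut bounded(2) z] assms by simp

lemma Im_delta_equations:
  assumes "delta_equations c nu nut z d dl"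
  shows "Im d * ((cmod z)\<^sup>2 - loop_gain c nu nut dl d) = Im z * (c * resolvent_moment nu 1 dl)"
    and "Im dl * ((cmod z)\<^sup>2 - loop_gain c nu nut dl d) = Im z * resolvent_moment nut 1 d"
proof -
  have d: "d = of_real c * resolvent_integral nu 1 dl z" and dl: "dl = resolvent_integral nut 1 d z"
    using assms unfolding delta_equations_def by argo+
  have z2: "(cmod z)\<^sup>2 \<noteq> 0" using z by simp
  have solve: "X * (Z - q) = p" if "Z \<noteq> 0" "X = (p + X * q) / Z" for X Z p q :: real
    using that by (simp add: field_simps)
  have Im_d: "Im d = c * Im (resolvent_integral nu 1 dl z)" using d by simp
  have Im_zd: "Im (z * d) = c * Im (z * resolvent_integral nu 1 dl z)"
    using d by (simp add: algebra_simps)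
  have "Im d = c * ((Im z * resolvent_moment nu 1 dl + Im (z * dl) * resolvent_moment nu 2 dl) / (cmod z)\<^sup>2)"
    unfolding Im_d using Im_resolvent_integral[OF nu bounded(1), of 1 z] z by (simp add: numeral_2_eq_2)
  then have "Im d = (Im z * (c * resolvent_moment nu 1 dl) + Im d * loop_gain c nu nut dl d) / (cmod z)\<^sup>2"
    unfolding Im_delta_tilde_eq[OF dl] loop_gain_def by (simp add: algebra_simps)
  then show "Im d * ((cmod z)\<^sup>2 - loop_gain c nu nut dl d) = Im z * (c * resolvent_moment nu 1 dl)"
    by (rule solve[OF z2])
  have "Im dl = (Im z * resolvent_moment nut 1 d + Im (z * d) * resolvent_moment nut 2 d) / (cmod z)\<^sup>2"
    using Im_resolvent_integral[OF nut bounded(2), of 1 z] z dl by (simp add: numeral_2_eq_2)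
  then have "Im dl = (Im z * resolvent_moment nut 1 d + Im dl * loop_gain c nu nut dl d) / (cmod z)\<^sup>2"
    unfolding Im_zd Im_z_mult_resolvent_integral[OF nu bounded(1) z] loop_gain_def by (simp add: algebra_simps)
  then show "Im dl * ((cmod z)\<^sup>2 - loop_gain c nu nut dl d) = Im z * resolvent_moment nut 1 d"
    by (rule solve[OF z2])
qed

lemma Im_m_eq:
  assumes "dl = resolvent_integral nut 1 d z"
  shows "Im (resolvent_integral nu 0 dl z) =
    (Im z * resolvent_moment nu 0 dl + Im d * resolvent_moment nut 2 d * resolvent_moment nu 1 dl) / (cmod z)\<^sup>2"
  using Im_resolvent_integral[OF nu bounded(1), of 0 z] z Im_delta_tilde_eq[OF assms] by simp

lemma delta_equations_loop_gain_less:
  assumes "delta_equations c nu nut z d dl" "c > 0" "Im z > 0" "Im d > 0" "nu \<noteq> return borel 0"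
  shows "loop_gain c nu nut dl d < (cmod z)\<^sup>2"
proof -
  have "Im z * (c * resolvent_moment nu 1 dl) > 0"
    using resolvent_moment_1_pos[OF nu bounded(1) assms(5)] assms(2,3) by simp
  then have "Im d * ((cmod z)\<^sup>2 - loop_gain c nu nut dl d) > 0"
    using Im_delta_equations(1)[OF assms(1)] by simp
  then show ?thesis using assms(4) by (simp add: zero_less_mult_iff)
qed

end

definition delta_map :: "real \<Rightarrow> real measure \<Rightarrow> real measure \<Rightarrow> complex \<Rightarrow> complex \<Rightarrow> complex" where
  "delta_map c nu nut z d = of_real c * resolvent_integral nu 1 (resolvent_integral nut 1 d z) z"

lemma delta_equations_iff_fixed_point:
  "delta_equations c nu nut z d dl \<longleftrightarrow> delta_map c nu nut z d = d \<and> dl = resolvent_integral nut 1 d z"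
  unfolding delta_equations_def delta_map_def by argo

lemma delta_map_lipschitz:
  assumes nu: "borel_prob nu" and nut: "borel_prob nut" and "c \<ge> 0" and z: "z \<noteq> 0"
    and bounded1: "resolvent_bounded nu (resolvent_integral nut 1 d1 z) A1" "resolvent_bounded nut d1 B1"
    and bounded2: "resolvent_bounded nu (resolvent_integral nut 1 d2 z) A2" "resolvent_bounded nut d2 B2"
  shows "cmod (delta_map c nu nut z d1 - delta_map c nu nut z d2) \<le> cmod (d1 - d2) *
    (sqrt (loop_gain c nu nut (resolvent_integral nut 1 d1 z) d1) *
     sqrt (loop_gain c nu nut (resolvent_integral nut 1 d2 z) d2)) / (cmod z)\<^sup>2"
proof -
  let ?dl1 = "resolvent_integral nut 1 d1 z" and ?dl2 = "resolvent_integral nut 1 d2 z"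
  let ?s1 = "sqrt (resolvent_moment nu 2 ?dl1) * sqrt (resolvent_moment nu 2 ?dl2)"
  let ?s2 = "sqrt (resolvent_moment nut 2 d1) * sqrt (resolvent_moment nut 2 d2)"
  have inner: "cmod (?dl1 - ?dl2) \<le> cmod (d1 - d2) / cmod z * ?s2"
    by (rule resolvent_integral_lipschitz[OF nut bounded1(2) bounded2(2) z])
  have "cmod (delta_map c nu nut z d1 - delta_map c nu nut z d2) =
      c * cmod (resolvent_integral nu 1 ?dl1 z - resolvent_integral nu 1 ?dl2 z)"
    unfolding delta_map_def using assms(3) by (simp add: right_diff_distrib[symmetric] norm_mult)
  also have "\<dots> \<le> c * (cmod (?dl1 - ?dl2) / cmod z * ?s1)"
    using resolvent_integral_lipschitz[OF nu bounded1(1) bounded2(1) z] assms(3) by (rule mult_left_mono)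
  also have "\<dots> \<le> c * ((cmod (d1 - d2) / cmod z * ?s2) / cmod z * ?s1)"
    using inner assms(3) by (intro mult_left_mono mult_right_mono divide_right_mono) (auto simp: resolvent_moment_even_nonneg)
  also have "\<dots> = cmod (d1 - d2) * ((sqrt c * sqrt c) * ?s1 * ?s2) / (cmod z)\<^sup>2"
    using assms(3) by (simp add: field_simps power2_eq_square)
  also have "(sqrt c * sqrt c) * ?s1 * ?s2 =
      sqrt (loop_gain c nu nut ?dl1 d1) * sqrt (loop_gain c nu nut ?dl2 d2)"
    unfolding loop_gain_def by (simp add: real_sqrt_mult mult_ac)
  finally show ?thesis .
qed

lemma sqrt_mult_sqrt_less:
  fixes a b Z :: real
  assumes "0 \<le> a" "0 \<le> b" "a < Z" "b < Z"
  shows "sqrt a * sqrt b < Z"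
proof -
  have "a * b < Z\<^sup>2" using assms unfolding power2_eq_square by (intro mult_strict_mono) auto
  then have "sqrt (a * b) < sqrt (Z\<^sup>2)" by (rule real_sqrt_less_mono)
  then show ?thesis using assms by (simp add: real_sqrt_mult)
qed

lemma delta_equations_unique:
  assumes nu: "borel_prob nu" and nut: "borel_prob nut"
    and nonneg: "AE t in nu. 0 \<le> t" "AE t in nut. 0 \<le> t"
    and "nu \<noteq> return borel 0" "c > 0" "Im z > 0"
    and sol1: "delta_equations c nu nut z d1 dl1" "Im d1 > 0" "Im dl1 > 0"
    and sol2: "delta_equations c nu nut z d2 dl2" "Im d2 > 0" "Im dl2 > 0"
  shows "d1 = d2 \<and> dl1 = dl2"
proof -
  have z: "z \<noteq> 0" using assms(7) by auto
  obtain A1 B1 A2 B2 where bounded: "resolvent_bounded nu dl1 A1" "resolvent_bounded nut d1 B1"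
      "resolvent_bounded nu dl2 A2" "resolvent_bounded nut d2 B2"
    using resolvent_bounded_upper_half_plane[OF nonneg(1) sol1(3)] resolvent_bounded_upper_half_plane[OF nonneg(2) sol1(2)]
      resolvent_bounded_upper_half_plane[OF nonneg(1) sol2(3)] resolvent_bounded_upper_half_plane[OF nonneg(2) sol2(2)]
    by blast
  have dl: "dl1 = resolvent_integral nut 1 d1 z" "dl2 = resolvent_integral nut 1 d2 z"
    using sol1(1) sol2(1) unfolding delta_equations_def by argo+
  let ?s = "sqrt (loop_gain c nu nut dl1 d1) * sqrt (loop_gain c nu nut dl2 d2)"
  have gain: "?s < (cmod z)\<^sup>2"
    using delta_equations_loop_gain_less[OF nu nut bounded(1,2) z sol1(1) assms(6,7) sol1(2) assms(5)]
      delta_equations_loop_gain_less[OF nu nut bounded(3,4) z sol2(1) assms(6,7) sol2(2) assms(5)]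
    by (intro sqrt_mult_sqrt_less loop_gain_nonneg) (use assms(6) in auto)
  have contraction: "cmod (d1 - d2) \<le> cmod (d1 - d2) * ?s / (cmod z)\<^sup>2"
  proof -
    have "delta_map c nu nut z d1 = d1" "delta_map c nu nut z d2 = d2"
      using sol1(1) sol2(1) by (simp_all add: delta_equations_iff_fixed_point)
    then show ?thesis
      using delta_map_lipschitz[OF nu nut less_imp_le[OF assms(6)] z bounded(1,2)[unfolded dl]
          bounded(3,4)[unfolded dl]]
      unfolding dl by simp
  qed
  have "d1 = d2"
  proof (rule ccontr)
    assume "d1 \<noteq> d2"
    then have "cmod (d1 - d2) * ?s / (cmod z)\<^sup>2 < cmod (d1 - d2) * (cmod z)\<^sup>2 / (cmod z)\<^sup>2"
      using gain z by (intro divide_strict_right_mono mult_strict_left_mono) auto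
    then show False using contraction z by simp
  qed
  then show ?thesis using dl by simp
qed

lemma delta_pair_eqI:
  assumes "borel_prob nu" "borel_prob nut" "AE t in nu. 0 \<le> t" "AE t in nut. 0 \<le> t"
    and "nu \<noteq> return borel 0" "c > 0" "Im z > 0"
    and "delta_equations c nu nut z d dl" "Im d > 0" "Im dl > 0"
  shows "delta_pair c nu nut z = (d, dl)"
  unfolding delta_pair_def
proof (rule the_equality)
  have eqs: "delta_equations c nu nut z d' dl' \<longleftrightarrow>
      d' = of_real c * (\<integral>t. of_real t / (- z * (1 + dl' * of_real t)) \<partial>nu) \<and>
      dl' = (\<integral>t. of_real t / (- z * (1 + d' * of_real t)) \<partial>nut)" for d' dl'
    unfolding delta_equations_def resolvent_integral_def power_one_right ..
  show "Im (fst (d, dl)) > 0 \<and> Im (snd (d, dl)) > 0 \<and>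
      fst (d, dl) = of_real c * (\<integral>t. of_real t / (- z * (1 + snd (d, dl) * of_real t)) \<partial>nu) \<and>
      snd (d, dl) = (\<integral>t. of_real t / (- z * (1 + fst (d, dl) * of_real t)) \<partial>nut)"
    using assms(8-10) unfolding eqs fst_conv snd_conv by argo
  fix p assume p: "Im (fst p) > 0 \<and> Im (snd p) > 0 \<and>
      fst p = of_real c * (\<integral>t. of_real t / (- z * (1 + snd p * of_real t)) \<partial>nu) \<and>
      snd p = (\<integral>t. of_real t / (- z * (1 + fst p * of_real t)) \<partial>nut)"
  then have "delta_equations c nu nut z (fst p) (snd p)" unfolding eqs by argo
  then show "p = (d, dl)"
    using delta_equations_unique[OF assms(1-7)] assms(8-10) p by (metis prod.collapse)
qed

section \<open>Solutions near a real point\<close>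

text \<open>\<open>d0\<close> and \<open>dt\<close> are the paper's real solution \<open>\<delta>\<close>, \<open>\<delta>~\<close> at \<open>z = x\<close>.\<close>
locale real_solution =
  fixes c x :: real and nu nut :: "real measure" and dt d0 M1 M2 :: real
  assumes nu: "borel_prob nu" and nut: "borel_prob nut"
    and nondegenerate: "nu \<noteq> return borel 0" "nut \<noteq> return borel 0"
    and c: "c > 0" and x: "x > 0"
    and bounded: "resolvent_bounded nu (of_real dt) M1" "resolvent_bounded nut (of_real d0) M2"
    and equations: "delta_equations c nu nut (of_real x) (of_real d0) (of_real dt)"
    and stable: "loop_gain c nu nut (of_real dt) (of_real d0) < x\<^sup>2"
begin

lemma bounds_pos: "M1 > 0" "M2 > 0"
  using resolvent_bounded_pos bounded by auto

lemma delta_tilde_eq: "resolvent_integral nut 1 (of_real d0) (of_real x) = of_real dt"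
  and delta_eq: "of_real c * resolvent_integral nu 1 (of_real dt) (of_real x) = of_real d0"
  using equations unfolding delta_equations_def by argo+

end

text \<open>A radius \<open>r\<close> around \<open>d0\<close> and a radius \<open>k r\<close> around \<open>x\<close>, small enough for
  \<open>delta_map\<close> to be a \<open>q\<close>-contraction of the closed disc of radius \<open>r\<close> for every \<open>z\<close> in the
  second disc.\<close>
locale perturbation = real_solution +
  fixes q r k :: real
  assumes q: "0 \<le> q" "q < 1" and r: "r > 0" and k: "k > 0"
    and r_small: "r \<le> 1/(2*M2)"
    and Ar_small: "(4*M2*M2/x + 2*M2*k/x\<^sup>2)*r \<le> 1/(2*M1)"
    and gain_small: "c * (resolvent_moment nu 2 (of_real dt) + 6*M1^3*((4*M2*M2/x + 2*M2*k/x\<^sup>2)*r)) *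
        (resolvent_moment nut 2 (of_real d0) + 6*M2^3*r) \<le> q*((x-k*r)*(x-k*r))"
    and kr_small: "k*r \<le> x/2"
    and drift_small: "c*((2*M2/x\<^sup>2)*(2/x)*(2*M1*M1) + 2*M1/x\<^sup>2) * (k*r) \<le> (1-q)*r"
begin

context
  fixes z :: complex
  assumes z: "cmod (z - of_real x) \<le> k*r"
begin

lemma norm_z_ge: "x - k*r \<le> cmod z" "x/2 \<le> cmod z"
proof -
  have "x - cmod z \<le> cmod (z - of_real x)"
    using norm_triangle_ineq2[of "of_real x" z] by (simp add: norm_minus_commute)
  then show "x - k*r \<le> cmod z" using z by linarith
  then show "x/2 \<le> cmod z" using kr_small by linarith
qed

lemma z_nonzero: "z \<noteq> 0"
  using norm_z_ge(2) x by auto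

lemma norm_inverse_diff_le: "cmod (1/z - 1/of_real x) \<le> 2*(k*r)/x\<^sup>2"
proof -
  have "1/z - 1/of_real x = (of_real x - z) / (z * of_real x)" using z_nonzero x by (simp add: field_simps)
  then have "cmod (1/z - 1/of_real x) = cmod (z - of_real x) / (cmod z * x)"
    using x by (simp add: norm_divide norm_mult norm_minus_commute)
  also have "\<dots> \<le> (k*r) / ((x/2) * x)" using z norm_z_ge(2) x k r
    by (intro frac_le mult_mono) auto
  also have "\<dots> = 2*(k*r)/x\<^sup>2" by (simp add: power2_eq_square)
  finally show ?thesis .
qed

context
  fixes d :: complex
  assumes d: "d \<in> cball (of_real d0) r"
begin

lemma norm_diff_center_le: "cmod (d - of_real d0) \<le> r"
  using d by (simp add: dist_norm norm_minus_commute)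

lemma disc_bounded_tilde: "resolvent_bounded nut d (2*M2)"
  using norm_diff_center_le r_small by (intro resolvent_bounded_perturb[OF bounded(2)]) simp

lemma disc_delta_tilde_near:
  "cmod (resolvent_integral nut 1 d z - of_real dt) \<le> (4*M2*M2/x + 2*M2*k/x\<^sup>2) * r"
proof -
  have "cmod (resolvent_integral nut 1 d z - resolvent_integral nut 1 (of_real d0) (of_real x)) \<le>
      cmod (d - of_real d0) / cmod z * (2*M2*M2) + cmod (1/z - 1/of_real x) * M2"
    using norm_diff_center_le r_small by (intro resolvent_integral_continuous[OF nut bounded(2) _ z_nonzero]) auto
  also have "\<dots> \<le> r / (x/2) * (2*M2*M2) + (2*(k*r)/x\<^sup>2) * M2"
    using norm_diff_center_le norm_z_ge(2) x bounds_pos norm_inverse_diff_le r by (intro add_mono mult_right_mono frac_le) auto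
  also have "\<dots> = (4*M2*M2/x + 2*M2*k/x\<^sup>2) * r" by (simp add: field_simps power2_eq_square)
  finally show ?thesis unfolding delta_tilde_eq .
qed

lemma disc_bounded: "resolvent_bounded nu (resolvent_integral nut 1 d z) (2*M1)"
  using disc_delta_tilde_near Ar_small by (intro resolvent_bounded_perturb[OF bounded(1)]) auto

lemma disc_loop_gain_le: "loop_gain c nu nut (resolvent_integral nut 1 d z) d \<le> q * (cmod z)\<^sup>2"
proof -
  let ?A = "4*M2*M2/x + 2*M2*k/x\<^sup>2"
  have moment1: "resolvent_moment nu 2 (resolvent_integral nut 1 d z) \<le> resolvent_moment nu 2 (of_real dt) + 6*M1^3*(?A*r)"
  proof -
    have "\<bar>resolvent_moment nu 2 (resolvent_integral nut 1 d z) - resolvent_moment nu 2 (of_real dt)\<bar>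
        \<le> 6*M1^3*cmod (resolvent_integral nut 1 d z - of_real dt)"
      using disc_delta_tilde_near Ar_small by (intro resolvent_moment_2_lipschitz[OF nu bounded(1)]) auto
    also have "\<dots> \<le> 6*M1^3*(?A*r)" using disc_delta_tilde_near bounds_pos by (intro mult_left_mono) auto
    finally show ?thesis by linarith
  qed
  have moment2: "resolvent_moment nut 2 d \<le> resolvent_moment nut 2 (of_real d0) + 6*M2^3*r"
  proof -
    have "\<bar>resolvent_moment nut 2 d - resolvent_moment nut 2 (of_real d0)\<bar> \<le> 6*M2^3*cmod (d - of_real d0)"
      using norm_diff_center_le r_small by (intro resolvent_moment_2_lipschitz[OF nut bounded(2)]) auto
    also have "\<dots> \<le> 6*M2^3*r" using norm_diff_center_le bounds_pos by (intro mult_left_mono) auto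
    finally show ?thesis by linarith
  qed
  have "loop_gain c nu nut (resolvent_integral nut 1 d z) d \<le>
      c * (resolvent_moment nu 2 (of_real dt) + 6*M1^3*(?A*r)) * (resolvent_moment nut 2 (of_real d0) + 6*M2^3*r)"
  proof -
    have "0 \<le> resolvent_moment nu 2 (resolvent_integral nut 1 d z)" "0 \<le> resolvent_moment nut 2 d"
      by (simp_all add: resolvent_moment_even_nonneg)
    then show ?thesis unfolding loop_gain_def using c moment1 moment2
      by (intro mult_mono mult_left_mono) auto
  qed
  also have "\<dots> \<le> q*((x-k*r)*(x-k*r))" by (rule gain_small)
  also have "\<dots> \<le> q * (cmod z)\<^sup>2"
    using norm_z_ge kr_small x q unfolding power2_eq_square by (intro mult_left_mono mult_mono) auto
  finally show ?thesis .
qed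

end

lemma delta_map_contraction:
  assumes "d1 \<in> cball (of_real d0) r" "d2 \<in> cball (of_real d0) r"
  shows "dist (delta_map c nu nut z d1) (delta_map c nu nut z d2) \<le> q * dist d1 d2"
proof -
  let ?g = "\<lambda>d. loop_gain c nu nut (resolvent_integral nut 1 d z) d"
  have "cmod (delta_map c nu nut z d1 - delta_map c nu nut z d2) \<le> cmod (d1 - d2) * (sqrt (?g d1) * sqrt (?g d2)) / (cmod z)\<^sup>2"
    using c by (intro delta_map_lipschitz[OF nu nut _ z_nonzero disc_bounded disc_bounded_tilde
          disc_bounded disc_bounded_tilde] assms) auto
  also have "\<dots> \<le> cmod (d1 - d2) * (q * (cmod z)\<^sup>2) / (cmod z)\<^sup>2"
  proof -
    have "sqrt (?g d1) * sqrt (?g d2) \<le> sqrt (q * (cmod z)\<^sup>2) * sqrt (q * (cmod z)\<^sup>2)"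
      using disc_loop_gain_le[OF assms(1)] disc_loop_gain_le[OF assms(2)] c q
      by (intro mult_mono real_sqrt_le_mono) (auto simp: loop_gain_nonneg)
    also have "\<dots> = q * (cmod z)\<^sup>2" using q by simp
    finally show ?thesis by (intro divide_right_mono mult_left_mono) auto
  qed
  also have "\<dots> = q * cmod (d1 - d2)" using z_nonzero by simp
  finally show ?thesis by (simp add: dist_norm)
qed

lemma delta_map_center_near: "cmod (delta_map c nu nut z (of_real d0) - of_real d0) \<le> (1-q)*r"
proof -
  have center: "of_real d0 \<in> cball (of_real d0) r" using r by simp
  have near: "cmod (resolvent_integral nut 1 (of_real d0) z - of_real dt) \<le> (2*(k*r)/x\<^sup>2) * M2"
  proof -
    have "cmod (resolvent_integral nut 1 (of_real d0) z - resolvent_integral nut 1 (of_real d0) (of_real x))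
        \<le> cmod (1/z - 1/of_real x) * M2"
      using resolvent_integral_continuous[OF nut bounded(2) _ z_nonzero, of "of_real d0" "of_real x"] bounds_pos by simp
    also have "\<dots> \<le> (2*(k*r)/x\<^sup>2) * M2" using norm_inverse_diff_le bounds_pos by (intro mult_right_mono) auto
    finally show ?thesis unfolding delta_tilde_eq .
  qed
  have "cmod (delta_map c nu nut z (of_real d0) - of_real d0) =
      c * cmod (resolvent_integral nu 1 (resolvent_integral nut 1 (of_real d0) z) z - resolvent_integral nu 1 (of_real dt) (of_real x))"
    unfolding delta_map_def delta_eq[symmetric] using c by (simp add: right_diff_distrib[symmetric] norm_mult)
  also have "\<dots> \<le> c * (cmod (resolvent_integral nut 1 (of_real d0) z - of_real dt) / cmod z * (2*M1*M1) +
      cmod (1/z - 1/of_real x) * M1)"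
    using c disc_delta_tilde_near[OF center] Ar_small
    by (intro mult_left_mono resolvent_integral_continuous[OF nu bounded(1) _ z_nonzero]) auto
  also have "\<dots> \<le> c * (((2*(k*r)/x\<^sup>2) * M2) / (x/2) * (2*M1*M1) + (2*(k*r)/x\<^sup>2) * M1)"
    using c near norm_z_ge(2) x norm_inverse_diff_le bounds_pos k r
    by (intro mult_left_mono add_mono mult_right_mono frac_le) auto
  also have "\<dots> = c*((2*M2/x\<^sup>2)*(2/x)*(2*M1*M1) + 2*M1/x\<^sup>2) * (k*r)"
    by (simp add: field_simps power2_eq_square)
  also have "\<dots> \<le> (1-q)*r" by (rule drift_small)
  finally show ?thesis .
qed

lemma delta_map_maps_disc:
  assumes "d \<in> cball (of_real d0) r"
  shows "delta_map c nu nut z d \<in> cball (of_real d0) r"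
proof -
  have "cmod (delta_map c nu nut z d - delta_map c nu nut z (of_real d0)) \<le> q * r"
    using delta_map_contraction[OF assms, of "of_real d0"] assms r q
    by (simp add: dist_norm) (metis dual_order.trans mult_left_mono norm_minus_commute)
  then have "cmod (delta_map c nu nut z d - of_real d0) \<le> r"
    using delta_map_center_near norm_triangle_ineq[of "delta_map c nu nut z d - delta_map c nu nut z (of_real d0)"
        "delta_map c nu nut z (of_real d0) - of_real d0"] by (simp add: algebra_simps)
  then show ?thesis by (simp add: dist_norm norm_minus_commute)
qed

lemma delta_map_fixed_point: "\<exists>d \<in> cball (of_real d0) r. delta_map c nu nut z d = d"
proof -
  have "\<exists>!d \<in> cball (of_real d0) r. delta_map c nu nut z d = d"
    using r q delta_map_maps_disc delta_map_contraction
    by (intro Banach_fix) (auto simp: complete_eq_closed)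
  then show ?thesis by blast
qed

end

lemma local_solution:
  assumes z: "Im z > 0" "cmod (z - of_real x) \<le> k*r"
  obtains d dl where "delta_pair c nu nut z = (d, dl)" "dl = resolvent_integral nut 1 d z"
    "Im d > 0" "resolvent_bounded nu dl (2*M1)" "resolvent_bounded nut d (2*M2)"
    "Im d * ((1-q)*(x\<^sup>2/4)) \<le> Im z * (c * resolvent_moment nu 1 dl)"
proof -
  have z0: "z \<noteq> 0" using z_nonzero[OF z(2)] .
  obtain d where d: "d \<in> cball (of_real d0) r" "delta_map c nu nut z d = d"
    using delta_map_fixed_point[OF z(2)] by blast
  define dl where "dl = resolvent_integral nut 1 d z"
  have eqs: "delta_equations c nu nut z d dl"
    unfolding delta_equations_iff_fixed_point dl_def using d(2) by simp
  have bdl: "resolvent_bounded nu dl (2*M1)" and bd: "resolvent_bounded nut d (2*M2)"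
    unfolding dl_def using disc_bounded[OF z(2) d(1)] disc_bounded_tilde[OF z(2) d(1)] .
  define D where "D = (cmod z)\<^sup>2 - loop_gain c nu nut dl d"
  have D: "(1-q)*(x\<^sup>2/4) \<le> D"
  proof -
    have "(x/2)\<^sup>2 \<le> (cmod z)\<^sup>2" using norm_z_ge(2)[OF z(2)] x by (intro power_mono) auto
    then have "(1-q)*(x\<^sup>2/4) \<le> (1-q)*(cmod z)\<^sup>2" using q by (intro mult_left_mono) (auto simp: power_divide)
    then show ?thesis unfolding D_def dl_def using disc_loop_gain_le[OF z(2) d(1)] by (simp add: algebra_simps)
  qed
  have D_pos: "D > 0" using D q x by (smt (verit) mult_pos_pos zero_less_power divide_pos_pos)
  have Im_d: "Im d * D = Im z * (c * resolvent_moment nu 1 dl)"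
    and Im_dl: "Im dl * D = Im z * resolvent_moment nut 1 d"
    unfolding D_def using Im_delta_equations[OF nu nut bdl bd z0 eqs] by auto
  have "Im d > 0" using Im_d D_pos z(1) c resolvent_moment_1_pos[OF nu bdl nondegenerate(1)]
    by (smt (verit) mult_pos_pos zero_less_mult_iff)
  moreover have "Im dl > 0" using Im_dl D_pos z(1) resolvent_moment_1_pos[OF nut bd nondegenerate(2)]
    by (smt (verit) mult_pos_pos zero_less_mult_iff)
  ultimately have "delta_pair c nu nut z = (d, dl)"
    using delta_pair_eqI[OF nu nut resolvent_bounded_AE_nonneg[OF bounded(1)]
        resolvent_bounded_AE_nonneg[OF bounded(2)] nondegenerate(1) c z(1) eqs] by blast
  moreover have "Im d * ((1-q)*(x\<^sup>2/4)) \<le> Im z * (c * resolvent_moment nu 1 dl)"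
    using Im_d D \<open>Im d > 0\<close> by (metis mult_left_mono less_imp_le)
  ultimately show ?thesis using that dl_def \<open>Im d > 0\<close> bdl bd by blast
qed

lemma local_Im_m_fun_le:
  "\<exists>K. \<forall>z. Im z > 0 \<longrightarrow> cmod (z - of_real x) \<le> k*r \<longrightarrow> Im (m_fun c nu nut z) \<le> K * Im z"
proof -
  define B1 B2 where "B1 = (2*M1)*(2*M1)" and "B2 = (2*M2)*(2*M2)"
  define Q where "Q = c * B1 / ((1-q)*(x\<^sup>2/4))"
  have Q: "Q \<ge> 0" unfolding Q_def B1_def using c q by simp
  have "Im (m_fun c nu nut z) \<le> (B1 + Q * B2 * B1) / (x\<^sup>2/4) * Im z"
    if z: "Im z > 0" "cmod (z - of_real x) \<le> k*r" for z
  proof -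
    obtain d dl where pair: "delta_pair c nu nut z = (d, dl)" and dl: "dl = resolvent_integral nut 1 d z"
      and Im_d: "Im d > 0" and bdl: "resolvent_bounded nu dl (2*M1)" and bd: "resolvent_bounded nut d (2*M2)"
      and Im_d_le: "Im d * ((1-q)*(x\<^sup>2/4)) \<le> Im z * (c * resolvent_moment nu 1 dl)"
      by (rule local_solution[OF z])
    have I0: "resolvent_moment nu 0 dl \<le> B1" and I1: "resolvent_moment nu 1 dl \<le> B1"
      and I2: "resolvent_moment nut 2 d \<le> B2"
      unfolding B1_def B2_def using resolvent_moment_le[OF nu bdl] resolvent_moment_le[OF nut bd] by auto
    have I1_pos: "resolvent_moment nu 1 dl > 0" by (rule resolvent_moment_1_pos[OF nu bdl nondegenerate(1)])
    have "Im d \<le> Im z * Q"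
    proof -
      have "c * resolvent_moment nu 1 dl / ((1-q)*(x\<^sup>2/4)) \<le> Q"
        unfolding Q_def using c I1 q x by (intro divide_right_mono mult_left_mono) auto
      moreover have "Im d \<le> Im z * (c * resolvent_moment nu 1 dl / ((1-q)*(x\<^sup>2/4)))"
        using Im_d_le q x by (simp add: le_divide_eq)
      ultimately show ?thesis using z(1) by (smt (verit) mult_left_mono)
    qed
    have "m_fun c nu nut z = resolvent_integral nu 0 dl z"
      unfolding m_fun_def pair resolvent_integral_def by simp
    then have "Im (m_fun c nu nut z) =
        (Im z * resolvent_moment nu 0 dl + Im d * resolvent_moment nut 2 d * resolvent_moment nu 1 dl) / (cmod z)\<^sup>2"
      using Im_m_eq[OF nu nut bdl bd z_nonzero[OF z(2)] dl] by simp
    also have "\<dots> \<le> (B1 + Q * B2 * B1) * Im z / (x\<^sup>2/4)"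
    proof (rule frac_le)
      show "Im z * resolvent_moment nu 0 dl + Im d * resolvent_moment nut 2 d * resolvent_moment nu 1 dl
          \<le> (B1 + Q * B2 * B1) * Im z"
        using z(1) I0 I1 I2 \<open>Im d \<le> Im z * Q\<close> Im_d I1_pos Q
        by (smt (verit, best) mult_mono mult_left_mono mult_right_mono mult_nonneg_nonneg
            resolvent_moment_even_nonneg even_numeral distrib_right mult.commute mult.assoc)
      show "0 < x\<^sup>2/4" using x by simp
      show "x\<^sup>2/4 \<le> (cmod z)\<^sup>2"
        using norm_z_ge(2)[OF z(2)] x power_mono[of "x/2" "cmod z" 2] by (simp add: power_divide)
    qed (unfold B1_def B2_def, use z(1) Q bounds_pos in \<open>intro mult_nonneg_nonneg add_nonneg_nonneg; simp\<close>)
    finally show ?thesis by (simp only: times_divide_eq_left)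
  qed
  then show ?thesis by blast
qed

end

context real_solution
begin

lemma exists_contraction_ratio:
  "\<exists>q. 0 \<le> q \<and> q < 1 \<and> loop_gain c nu nut (of_real dt) (of_real d0) < q * x\<^sup>2"
proof -
  define g where "g = loop_gain c nu nut (of_real dt) (of_real d0) / x\<^sup>2"
  have x2: "x\<^sup>2 > 0" using x by simp
  have g: "0 \<le> g" "g < 1"
    using stable x2 loop_gain_nonneg[of c nu nut "of_real dt" "of_real d0"] c
    unfolding g_def by (auto simp: divide_less_eq)
  have "loop_gain c nu nut (of_real dt) (of_real d0) = g * x\<^sup>2" unfolding g_def using x2 by simp
  also have "\<dots> < (1 + g)/2 * x\<^sup>2" using g x2 by (intro mult_strict_right_mono) auto
  finally show ?thesis using g by (intro exI[of _ "(1 + g)/2"]) auto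
qed

text \<open>\<open>k\<close> is chosen so that \<open>drift_small\<close> holds for every \<open>r\<close>; the other conditions hold for
  all small \<open>r\<close> by continuity at \<open>r = 0\<close>.\<close>
lemma exists_perturbation: "\<exists>q r k. perturbation c x nu nut dt d0 M1 M2 q r k"
proof -
  obtain q where q: "0 \<le> q" "q < 1" and "loop_gain c nu nut (of_real dt) (of_real d0) < q * x\<^sup>2"
    using exists_contraction_ratio by blast
  define P1 P2 where "P1 = resolvent_moment nu 2 (of_real dt)" and "P2 = resolvent_moment nut 2 (of_real d0)"
  then have gain: "c*P1*P2 < q*(x*x)"
    using \<open>loop_gain c nu nut (of_real dt) (of_real d0) < q * x\<^sup>2\<close>
    unfolding loop_gain_def by (simp add: power2_eq_square)
  define L where "L = c*((2*M2/x\<^sup>2)*(2/x)*(2*M1*M1) + 2*M1/x\<^sup>2)"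
  have L: "L \<ge> 0" unfolding L_def using c bounds_pos x by simp
  define k where "k = (1-q)/(L+1)"
  have k: "k > 0" unfolding k_def using q L by simp
  have Lk: "L * k \<le> 1 - q"
  proof -
    have "L * k = (1-q) * (L/(L+1))" unfolding k_def by simp
    also have "\<dots> \<le> (1-q) * 1" using q L by (intro mult_left_mono) auto
    finally show ?thesis by simp
  qed
  define A where "A = 4*M2*M2/x + 2*M2*k/x\<^sup>2"
  have "eventually (\<lambda>r. r < 1/(2*M2)) (at_right 0)"
    by (rule order_tendstoD(2)[OF tendsto_ident_at]) (use bounds_pos in simp)
  moreover have "eventually (\<lambda>r. A*r < 1/(2*M1)) (at_right 0)"
  proof (rule order_tendstoD(2))
    show "((\<lambda>r. A*r) \<longlongrightarrow> A*0) (at_right 0)" by (intro tendsto_intros)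
  qed (use bounds_pos in simp)
  moreover have "eventually (\<lambda>r. c*(P1 + 6*M1^3*(A*r))*(P2 + 6*M2^3*r) < q*((x-k*r)*(x-k*r))) (at_right 0)"
  proof -
    have "((\<lambda>r. c*(P1 + 6*M1^3*(A*r))*(P2 + 6*M2^3*r) - q*((x-k*r)*(x-k*r))) \<longlongrightarrow>
        c*(P1 + 6*M1^3*(A*0))*(P2 + 6*M2^3*0) - q*((x-k*0)*(x-k*0))) (at_right 0)"
      by (intro tendsto_intros)
    from order_tendstoD(2)[OF this, of 0] show ?thesis using gain by simp
  qed
  moreover have "eventually (\<lambda>r. k*r < x/2) (at_right 0)"
  proof (rule order_tendstoD(2))
    show "((\<lambda>r. k*r) \<longlongrightarrow> k*0) (at_right 0)" by (intro tendsto_intros)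
  qed (use x in simp)
  moreover have "eventually (\<lambda>r. 0 < r) (at_right (0::real))"
    by (rule eventually_at_right_less)
  ultimately have "eventually (\<lambda>r. 0 < r \<and> r < 1/(2*M2) \<and> A*r < 1/(2*M1) \<and>
      c*(P1 + 6*M1^3*(A*r))*(P2 + 6*M2^3*r) < q*((x-k*r)*(x-k*r)) \<and> k*r < x/2) (at_right 0)"
    by eventually_elim auto
  then obtain r where r: "0 < r" "r < 1/(2*M2)" "A*r < 1/(2*M1)"
      "c*(P1 + 6*M1^3*(A*r))*(P2 + 6*M2^3*r) < q*((x-k*r)*(x-k*r))" "k*r < x/2"
    using eventually_happens trivial_limit_at_right_real by blast
  have "L * (k*r) \<le> (1-q)*r" using Lk r(1) by (simp add: mult.assoc[symmetric] mult_right_mono)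
  then have "perturbation c x nu nut dt d0 M1 M2 q r k"
    using r q k unfolding perturbation_def perturbation_axioms_def A_def P1_def P2_def L_def
    by (auto intro: real_solution_axioms)
  then show ?thesis by blast
qed

lemma local_Im_m_fun_bound:
  "\<exists>\<rho>>0. \<exists>K. \<forall>z. Im z > 0 \<longrightarrow> cmod (z - of_real x) \<le> \<rho> \<longrightarrow> Im (m_fun c nu nut z) \<le> K * Im z"
proof -
  obtain q r k where "perturbation c x nu nut dt d0 M1 M2 q r k" using exists_perturbation by blast
  then interpret perturbation c x nu nut dt d0 M1 M2 q r k .
  show ?thesis using local_Im_m_fun_le k r by (intro exI[of _ "k*r"]) auto
qed

end

section \<open>Stieltjes transforms and null balls\<close>

lemma Im_stieltjes_kernel:
  "h > 0 \<Longrightarrow> Im (1 / (of_real t - Complex E h)) = h / ((t - E)\<^sup>2 + h\<^sup>2)"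
  by (simp add: Im_divide power2_eq_square)

lemma indicator_ball_le_poisson_kernel:
  fixes E h t :: real
  assumes "h > 0"
  shows "indicator (ball E h) t \<le> 2*h * (h / ((t - E)\<^sup>2 + h\<^sup>2))"
proof (cases "t \<in> ball E h")
  case True
  then have "\<bar>t - E\<bar> < h" by (simp add: dist_real_def abs_minus_commute)
  then have "\<bar>t - E\<bar>\<^sup>2 < h\<^sup>2" by (intro power_strict_mono) auto
  then have "(t - E)\<^sup>2 + h\<^sup>2 \<le> 2*h*h" by (simp add: power2_eq_square)
  moreover have "0 < (t - E)\<^sup>2 + h\<^sup>2" using assms by (simp add: add_nonneg_pos)
  ultimately have "1 \<le> 2*h * (h / ((t - E)\<^sup>2 + h\<^sup>2))" by (simp add: divide_simps)
  then show ?thesis using True by simp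
qed (use assms in simp)

lemma measure_ball_le_Im_stieltjes:
  assumes mu: "borel_prob mu" and h: "h > 0"
  shows "measure mu (ball E h) \<le> 2*h * Im (\<integral>t. 1 / (of_real t - Complex E h) \<partial>mu)"
proof -
  interpret prob_space mu using mu unfolding borel_prob_def by simp
  let ?p = "\<lambda>t. h / ((t - E)\<^sup>2 + h\<^sup>2)"
  have "integrable mu (\<lambda>t. 1 / (of_real t - Complex E h))"
  proof (rule borel_prob_integrable_bounded[OF mu _, where C = "1/h"])
    show "AE t in mu. norm (1 / (of_real t - Complex E h)) \<le> 1/h"
    proof (rule AE_I2)
      fix t :: real
      have "h \<le> cmod (of_real t - Complex E h)" using abs_Im_le_cmod[of "of_real t - Complex E h"] h by simp
      then show "norm (1 / (of_real t - Complex E h)) \<le> 1/h" using h by (simp add: norm_divide divide_simps)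
    qed
  qed measurable
  then have "Im (\<integral>t. 1 / (of_real t - Complex E h) \<partial>mu) = (\<integral>t. Im (1 / (of_real t - Complex E h)) \<partial>mu)"
    by simp
  also have "\<dots> = (\<integral>t. ?p t \<partial>mu)" using Im_stieltjes_kernel[OF h] by simp
  finally have Im_eq: "Im (\<integral>t. 1 / (of_real t - Complex E h) \<partial>mu) = (\<integral>t. ?p t \<partial>mu)" .
  have "integrable mu ?p"
  proof (rule borel_prob_integrable_bounded[OF mu _, where C = "1/h"])
    show "AE t in mu. norm (?p t) \<le> 1/h"
    proof (rule AE_I2)
      fix t :: real
      have "?p t \<le> h / h\<^sup>2" using h by (intro divide_left_mono) (auto simp: add_nonneg_pos)
      then show "norm (?p t) \<le> 1/h" using h by (simp add: power2_eq_square add_nonneg_pos)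
    qed
  qed measurable
  have "measure mu (ball E h) = (\<integral>t. indicator (ball E h) t \<partial>mu)"
    using borel_prob_space[OF mu] by simp
  also have "\<dots> \<le> (\<integral>t. 2*h * ?p t \<partial>mu)"
  proof (rule integral_mono)
    have "ball E h \<in> sets mu" using mu unfolding borel_prob_def by simp
    then show "integrable mu (indicator (ball E h) :: real \<Rightarrow> real)"
      by (rule integrable_real_indicator) (simp add: emeasure_eq_measure)
  qed (use integrable_mult_right[OF \<open>integrable mu ?p\<close>, of "2*h"] indicator_ball_le_poisson_kernel[OF h] in auto)
  also have "\<dots> = 2*h * Im (\<integral>t. 1 / (of_real t - Complex E h) \<partial>mu)"
    unfolding Im_eq by (rule integral_mult_right_zero)
  finally show ?thesis .
qed

lemma ball_subset_Union_balls:
  assumes r: "r > 0" and N: "N \<ge> (1::nat)"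
  shows "ball x r \<subseteq> (\<Union>k<N. ball (x - r + (2 * real k + 1) * r / real N) (2 * r / real N))"
proof
  fix y assume "y \<in> ball x r"
  then have yx: "\<bar>y - x\<bar> < r" by (simp add: dist_real_def abs_minus_commute)
  have Np: "real N > 0" using N by simp
  define u where "u = (y - x + r) * real N / (2 * r)"
  have u0: "0 \<le> u" unfolding u_def using yx r Np by (simp add: abs_less_iff)
  have uN: "u < real N"
  proof -
    have "(y - x + r) * real N < (2 * r) * real N" using yx Np by (intro mult_strict_right_mono) auto
    then show ?thesis unfolding u_def using r by (simp add: divide_less_eq mult.commute)
  qed
  define k where "k = nat \<lfloor>u\<rfloor>"
  have k: "real k \<le> u" "u < real k + 1" unfolding k_def using u0 by linarith+
  have "y - (x - r + (2 * real k + 1) * r / real N) = (2*u - 2*real k - 1) * r / real N"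
    unfolding u_def using r Np by (simp add: field_simps)
  moreover have "\<bar>2*u - 2*real k - 1\<bar> * r / real N < 2 * r / real N"
  proof -
    have "\<bar>2*u - 2*real k - 1\<bar> * r \<le> 1 * r" using k r by (intro mult_right_mono) auto
    then show ?thesis using r Np by (intro divide_strict_right_mono) auto
  qed
  ultimately have "\<bar>y - (x - r + (2 * real k + 1) * r / real N)\<bar> < 2 * r / real N"
    using r Np by (simp add: abs_mult abs_div)
  then have "y \<in> ball (x - r + (2 * real k + 1) * r / real N) (2 * r / real N)"
    by (simp add: dist_real_def abs_minus_commute)
  moreover have "k < N" using k uN by linarith
  ultimately show "y \<in> (\<Union>k<N. ball (x - r + (2 * real k + 1) * r / real N) (2 * r / real N))"
    by blast
qed

lemma measure_ball_le_of_quadratic_bound: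
  assumes mu: "borel_prob mu" and r: "r > 0" and N: "N \<ge> (1::nat)"
    and small: "\<And>E h. \<bar>E - x\<bar> + h \<le> 4*r \<Longrightarrow> h > 0 \<Longrightarrow> measure mu (ball E h) \<le> K * h\<^sup>2"
  shows "measure mu (ball x r) \<le> 4*K*r\<^sup>2 / real N"
proof -
  interpret prob_space mu using mu unfolding borel_prob_def by simp
  have sets: "A \<in> sets mu" if "A \<in> sets borel" for A using mu that unfolding borel_prob_def by simp
  have Np: "real N > 0" using N by simp
  define E where "E k = x - r + (2 * real k + 1) * r / real N" for k :: nat
  define h where "h = 2 * r / real N"
  have h: "h > 0" unfolding h_def using r Np by simp
  have "measure mu (ball x r) \<le> measure mu (\<Union>k<N. ball (E k) h)"
    using ball_subset_Union_balls[OF r N, of x] unfolding E_def h_def by (intro finite_measure_mono sets) auto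
  also have "\<dots> \<le> (\<Sum>k<N. measure mu (ball (E k) h))"
    by (rule finite_measure_subadditive_finite) (auto intro: sets)
  also have "\<dots> \<le> (\<Sum>k<N. K*h\<^sup>2)"
  proof (rule sum_mono)
    fix k assume "k \<in> {..<N}"
    then have "(2 * real k + 1) * r \<le> (2 * real N) * r" using r by (intro mult_right_mono) auto
    then have "(2 * real k + 1) * r / real N \<le> 2 * r" using Np by (simp add: divide_le_eq mult_ac)
    moreover have "0 \<le> (2 * real k + 1) * r / real N" using r Np by simp
    ultimately have "\<bar>E k - x\<bar> \<le> r" unfolding E_def by (simp add: abs_le_iff)
    moreover have "h \<le> 2 * r" unfolding h_def using r N by (simp add: divide_le_eq)
    ultimately show "measure mu (ball (E k) h) \<le> K*h\<^sup>2" using small h by simp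
  qed
  also have "\<dots> = 4*K*r\<^sup>2 / real N" unfolding h_def using Np by (simp add: field_simps power2_eq_square)
  finally show ?thesis .
qed

lemma emeasure_ball_eq_0_of_quadratic_bound:
  assumes mu: "borel_prob mu" and r: "r > 0"
    and small: "\<And>E h. \<bar>E - x\<bar> + h \<le> 4*r \<Longrightarrow> h > 0 \<Longrightarrow> measure mu (ball E h) \<le> K * h\<^sup>2"
  shows "emeasure mu (ball x r) = 0"
proof -
  interpret prob_space mu using mu unfolding borel_prob_def by simp
  have "measure mu (ball x r) = 0"
  proof (rule ccontr)
    assume "measure mu (ball x r) \<noteq> 0"
    then have pos: "measure mu (ball x r) > 0" using measure_nonneg[of mu "ball x r"] by linarith
    define N where "N = nat \<lceil>4*\<bar>K\<bar>*r\<^sup>2 / measure mu (ball x r)\<rceil> + 1"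
    have N: "N \<ge> 1" unfolding N_def by simp
    have "4*\<bar>K\<bar>*r\<^sup>2 / measure mu (ball x r) < real N" unfolding N_def by linarith
    then have "4*\<bar>K\<bar>*r\<^sup>2 < real N * measure mu (ball x r)" using pos by (simp add: divide_less_eq)
    moreover have "measure mu (ball x r) \<le> 4*\<bar>K\<bar>*r\<^sup>2 / real N"
    proof -
      have "4*K*r\<^sup>2 / real N \<le> 4*\<bar>K\<bar>*r\<^sup>2 / real N" by (intro divide_right_mono mult_right_mono) auto
      then show ?thesis using measure_ball_le_of_quadratic_bound[of mu r N x K, OF mu r N small] by linarith
    qed
    ultimately show False using N by (simp add: le_divide_eq mult.commute)
  qed
  then show ?thesis by (simp add: emeasure_eq_measure)
qed

lemma emeasure_ball_eq_0_of_Im_stieltjes_bound: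
  assumes mu: "borel_prob mu" and rho: "\<rho> > 0"
    and bound: "\<forall>z. Im z > 0 \<longrightarrow> cmod (z - of_real x) \<le> \<rho> \<longrightarrow>
      Im (\<integral>t. 1 / (of_real t - z) \<partial>mu) \<le> K * Im z"
  shows "emeasure mu (ball x (\<rho>/4)) = 0"
proof (rule emeasure_ball_eq_0_of_quadratic_bound[OF mu])
  show "\<rho>/4 > 0" using rho by simp
  fix E h :: real assume "\<bar>E - x\<bar> + h \<le> 4*(\<rho>/4)" "h > 0"
  then have Eh: "\<bar>E - x\<bar> + h \<le> \<rho>" "h > 0" by simp_all
  have "cmod (Complex E h - of_real x) \<le> \<bar>E - x\<bar> + \<bar>h\<bar>"
    using cmod_le[of "Complex E h - of_real x"] by simp
  then have "cmod (Complex E h - of_real x) \<le> \<rho>" using Eh by simp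
  then have "Im (\<integral>t. 1 / (of_real t - Complex E h) \<partial>mu) \<le> K * h"
    using bound[rule_format, of "Complex E h"] Eh(2) by simp
  then have "2*h * Im (\<integral>t. 1 / (of_real t - Complex E h) \<partial>mu) \<le> 2*h * (K * h)"
    using Eh(2) by (intro mult_left_mono) auto
  moreover have "2*h * (K * h) = (2*K) * h\<^sup>2" by (simp add: power2_eq_square)
  ultimately show "measure mu (ball E h) \<le> (2*K) * h\<^sup>2"
    using measure_ball_le_Im_stieltjes[OF mu Eh(2), of E] by linarith
qed

lemma resolvent_integral_of_real:
  "resolvent_integral N 1 (of_real d) (of_real x) = of_real (\<integral>t. t / (- x * (1 + d * t)) \<partial>N)"
proof -
  have "of_real (\<integral>t. t / (- x * (1 + d * t)) \<partial>N) = (\<integral>t. complex_of_real (t / (- x * (1 + d * t))) \<partial>N)"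
    by (rule integral_complex_of_real[symmetric])
  also have "\<dots> = resolvent_integral N 1 (of_real d) (of_real x)"
    unfolding resolvent_integral_def by (rule Bochner_Integration.integral_cong) simp_all
  finally show ?thesis by simp
qed

lemma resolvent_moment_of_real:
  "(\<integral>t. t\<^sup>2 / (x\<^sup>2 * (1 + d * t)\<^sup>2) \<partial>N) = resolvent_moment N 2 (of_real d) / x\<^sup>2"
proof -
  have "resolvent_moment N 2 (of_real d) / x\<^sup>2 = (\<integral>t. t\<^sup>2 / (cmod (1 + of_real d * of_real t))\<^sup>2 / x\<^sup>2 \<partial>N)"
    unfolding resolvent_moment_def by (rule integral_divide_zero[symmetric])
  also have "\<dots> = (\<integral>t. t\<^sup>2 / (x\<^sup>2 * (1 + d * t)\<^sup>2) \<partial>N)"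
  proof (rule Bochner_Integration.integral_cong)
    fix t
    have "cmod (1 + of_real d * of_real t) = \<bar>1 + d * t\<bar>"
      by (metis norm_of_real of_real_1 of_real_add of_real_mult)
    then show "t\<^sup>2 / (cmod (1 + of_real d * of_real t))\<^sup>2 / x\<^sup>2 = t\<^sup>2 / (x\<^sup>2 * (1 + d * t)\<^sup>2)"
      by (simp add: divide_divide_eq_left mult.commute)
  qed simp
  finally show ?thesis by simp
qed

lemma loop_gain_less_of_real:
  assumes "x \<noteq> 0"
    and "1 - x\<^sup>2 * (c * (\<integral>t. t\<^sup>2 / (x\<^sup>2 * (1 + dt * t)\<^sup>2) \<partial>nu))
       * (\<integral>t. t\<^sup>2 / (x\<^sup>2 * (1 + d0 * t)\<^sup>2) \<partial>nut) > 0"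
  shows "loop_gain c nu nut (of_real dt) (of_real d0) < x\<^sup>2"
proof -
  have "x\<^sup>2 * (c * (resolvent_moment nu 2 (of_real dt) / x\<^sup>2)) * (resolvent_moment nut 2 (of_real d0) / x\<^sup>2)
      = loop_gain c nu nut (of_real dt) (of_real d0) / x\<^sup>2"
    unfolding loop_gain_def using assms(1) by (simp add: field_simps power2_eq_square)
  then show ?thesis using assms unfolding resolvent_moment_of_real by (simp add: divide_less_eq)
qed

theorem proposition3p7:
  fixes c x dt :: real and nu nut mu :: "real measure"
  assumes "c > 0"
    and "prob_on_Rplus nu" and "nu \<noteq> return borel 0"
    and "prob_on_Rplus nut" and "nut \<noteq> return borel 0"
    and "prob_on_Rplus mu"
    and "\<forall>z. Im z > 0 \<longrightarrow> (\<integral>t. 1 / (complex_of_real t - z) \<partial>mu) = m_fun c nu nut z"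
    and "dt \<in> Dset nu"
    and "x \<noteq> 0"
    and "(c * (\<integral>t. t / (- x * (1 + dt * t)) \<partial>nu)) \<in> Dset nut"
    and "dt = (\<integral>t. t / (- x * (1 + (c * (\<integral>s. s / (- x * (1 + dt * s)) \<partial>nu)) * t)) \<partial>nut)"
    and "1 - x\<^sup>2 * (c * (\<integral>t. t\<^sup>2 / (x\<^sup>2 * (1 + dt * t)\<^sup>2) \<partial>nu))
             * (\<integral>t. t\<^sup>2 / (x\<^sup>2 * (1 + (c * (\<integral>s. s / (- x * (1 + dt * s)) \<partial>nu)) * t)\<^sup>2) \<partial>nut) > 0"
  shows "x \<notin> msupp mu"
proof (cases "x < 0")
  case True
  then show ?thesis by (rule prob_on_Rplus_notin_msupp_neg[OF assms(6)])
next
  case False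
  with assms(9) have x: "x > 0" by simp
  define d0 where "d0 = c * (\<integral>t. t / (- x * (1 + dt * t)) \<partial>nu)"
  obtain M1 M2 where "resolvent_bounded nu (of_real dt) M1" "resolvent_bounded nut (of_real d0) M2"
    using resolvent_bounded_Dset[OF assms(2,8)] resolvent_bounded_Dset[OF assms(4) assms(10)[folded d0_def]]
    by blast
  moreover have "delta_equations c nu nut (of_real x) (of_real d0) (of_real dt)"
    unfolding delta_equations_def resolvent_integral_of_real d0_def using assms(11) by simp
  ultimately interpret real_solution c x nu nut dt d0 M1 M2
    using assms(1-5) x loop_gain_less_of_real[OF assms(9) assms(12)[folded d0_def]]
    by unfold_locales (auto intro: prob_on_Rplus_borel_prob)
  obtain \<rho> K where "\<rho> > 0"
    and "\<forall>z. Im z > 0 \<longrightarrow> cmod (z - of_real x) \<le> \<rho> \<longrightarrow> Im (m_fun c nu nut z) \<le> K * Im z"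
    using local_Im_m_fun_bound by blast
  then have "emeasure mu (ball x (\<rho>/4)) = 0"
    using assms(7) by (intro emeasure_ball_eq_0_of_Im_stieltjes_bound[OF prob_on_Rplus_borel_prob[OF assms(6)]]) auto
  then show ?thesis using \<open>\<rho> > 0\<close> unfolding msupp_def by force
qed

end
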